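(* Let $Q$ be a closed polyhedral partially ordered abelian group, $\tau$ a face of $Q_+$, and $M$ a $Q$-module. Then $M$ is $\tau$-coprimary if and only if every nonzero homogeneous element of $M$ divides a $\tau$-coprimary element, where $y\in M_q$ divides $y'\in M_{q'}$ if $q\preceq q'$ and the structure map $M_q\to M_{q'}$ sends $y$ to $y'$.
   Context: A partially ordered abelian group is an abelian group $Q$ generated by a submonoid $Q_+$ whose only unit is $0$; $q\preceq q'$ iff $q'-q\in Q_+$. A face is a submonoid $\sigma\subseteq Q_+$ with $Q_+\setminus\sigma$ an ideal of $Q_+$; $Q$ is polyhedral if it has finitely many faces. A ray is a face that is totally ordered by $\preceq$. $Q$ is closed if for each face $\tau$, the set $Q_+\setminus\tau$ equals $\bigcup_{\rho}(\rho\setminus\{0\})+Q_+$, the union over rays $\rho\not\subseteq\tau$. A $Q$-module is a $Q$-graded vector space $M=\bigoplus_q M_q$ over a field $k$ with compatible structure maps $M_q\to M_{q'}$ for $q\preceq q'$ (equivalently a $Q$-graded $k[Q_+]$-module). For a face $\tau$, $M_\tau=M\otimes_{k[Q_+]}k[Q_++\mathbb Z\tau]$ ($\mathbb Z\tau$ the subgroup generated by $\tau$), with natural map $M\to M_\tau$; $\Gamma_\tau M=\bigcap_{\tau'\not\subseteq\tau}\ker(M\to M_{\tau'})$ over faces $\tau'\not\subseteq\tau$. $M$ is $\tau$-coprimary if $M\to M_\tau$ is injective and $\Gamma_\tau(M_\tau)$ is an essential submodule of $M_\tau$ (meets every nonzero submodule nontrivially). A homogeneous $y\in M_q$ is $\tau$-persistent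 if its image in $M_{q'}$ is nonzero for all $q'\in q+\tau$; it is $\bar\tau$-transient if for each $f\in Q_+\setminus\tau$ the image of $y$ in $M_{q+\lambda f}$ vanishes for all sufficiently large integers $\lambda$; it is $\tau$-coprimary if it is both. *)

theory Defs
  imports "HOL-Algebra.Module" "HOL-Algebra.Ring"
begin

text \<open>The group Q is the type 'q (an abelian group); the positive cone Q_+ is the set P.\<close>

definition pleq :: "'q::ab_group_add set \<Rightarrow> 'q \<Rightarrow> 'q \<Rightarrow> bool" where
  "pleq P q q' \<longleftrightarrow> q' - q \<in> P"

definition submonoid :: "'q::ab_group_add set \<Rightarrow> bool" where
  "submonoid S \<longleftrightarrow> 0 \<in> S \<and> (\<forall>a\<in>S. \<forall>b\<in>S. a + b \<in> S)"

definition pogroup :: "'q::ab_group_add set \<Rightarrow> bool" where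
  "pogroup P \<longleftrightarrow> submonoid P
     \<and> (\<forall>a\<in>P. - a \<in> P \<longrightarrow> a = 0)
     \<and> (\<forall>x::'q. \<exists>a\<in>P. \<exists>b\<in>P. x = a - b)"

definition face :: "'q::ab_group_add set \<Rightarrow> 'q set \<Rightarrow> bool" where
  "face P \<sigma> \<longleftrightarrow> \<sigma> \<subseteq> P \<and> submonoid \<sigma>
     \<and> (\<forall>a\<in>P - \<sigma>. \<forall>b\<in>P. a + b \<in> P - \<sigma>)"

definition polyhedral :: "'q::ab_group_add set \<Rightarrow> bool" where
  "polyhedral P \<longleftrightarrow> finite {\<sigma>. face P \<sigma>}"

definition ray :: "'q::ab_group_add set \<Rightarrow> 'q set \<Rightarrow> bool" where
  "ray P \<rho> \<longleftrightarrow> face P \<rho> \<and> (\<forall>a\<in>\<rho>. \<forall>b\<in>\<rho>. pleq P a b \<or> pleq P b a)"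

definition closed_pog :: "'q::ab_group_add set \<Rightarrow> bool" where
  "closed_pog P \<longleftrightarrow> (\<forall>\<tau>. face P \<tau> \<longrightarrow>
     P - \<tau> = (\<Union>\<rho>\<in>{\<rho>. ray P \<rho> \<and> \<not> \<rho> \<subseteq> \<tau>}. {a + b |a b. a \<in> \<rho> - {0} \<and> b \<in> P}))"

text \<open>A Q-module over the field K: a family of K-vector spaces (HOL-Algebra modules) indexed by
  degrees, together with structure maps M_q \<rightarrow> M_q' for q \<preceq> q'.\<close>

record ('q, 'k, 'v) qmodule =
  comp :: "'q \<Rightarrow> ('k, 'v) module"
  smap :: "'q \<Rightarrow> 'q \<Rightarrow> 'v \<Rightarrow> 'v"

definition klinear :: "('k, 'z) ring_scheme \<Rightarrow> ('k, 'v, 'a) module_scheme \<Rightarrow> ('k, 'w, 'b) module_scheme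
     \<Rightarrow> ('v \<Rightarrow> 'w) \<Rightarrow> bool" where
  "klinear K V W f \<longleftrightarrow> (\<forall>x\<in>carrier V. f x \<in> carrier W)
     \<and> (\<forall>x\<in>carrier V. \<forall>y\<in>carrier V. f (x \<oplus>\<^bsub>V\<^esub> y) = f x \<oplus>\<^bsub>W\<^esub> f y)
     \<and> (\<forall>c\<in>carrier K. \<forall>x\<in>carrier V. f (c \<odot>\<^bsub>V\<^esub> x) = c \<odot>\<^bsub>W\<^esub> f x)"

definition is_qmodule :: "'q::ab_group_add set \<Rightarrow> ('k, 'z) ring_scheme \<Rightarrow> ('q, 'k, 'v, 'e) qmodule_scheme \<Rightarrow> bool" where
  "is_qmodule P K M \<longleftrightarrow>
     (\<forall>q. module K (comp M q))
     \<and> (\<forall>q q'. pleq P q q' \<longrightarrow> klinear K (comp M q) (comp M q') (smap M q q'))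
     \<and> (\<forall>q. \<forall>y\<in>carrier (comp M q). smap M q q y = y)
     \<and> (\<forall>q q' q''. pleq P q q' \<longrightarrow> pleq P q' q'' \<longrightarrow>
          (\<forall>y\<in>carrier (comp M q). smap M q' q'' (smap M q q' y) = smap M q q'' y))"

definition graded_submodule :: "'q::ab_group_add set \<Rightarrow> ('k, 'z) ring_scheme
     \<Rightarrow> ('q, 'k, 'v, 'e) qmodule_scheme \<Rightarrow> ('q \<Rightarrow> 'v set) \<Rightarrow> bool" where
  "graded_submodule P K M N \<longleftrightarrow> (\<forall>q. submodule (N q) K (comp M q))
     \<and> (\<forall>q q'. pleq P q q' \<longrightarrow> (\<forall>y\<in>N q. smap M q q' y \<in> N q'))"

definition essential :: "'q::ab_group_add set \<Rightarrow> ('k, 'z) ring_scheme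
     \<Rightarrow> ('q, 'k, 'v, 'e) qmodule_scheme \<Rightarrow> ('q \<Rightarrow> 'v set) \<Rightarrow> bool" where
  "essential P K M N \<longleftrightarrow> graded_submodule P K M N \<and>
     (\<forall>T. graded_submodule P K M T \<and> (\<exists>q. \<exists>y\<in>T q. y \<noteq> \<zero>\<^bsub>comp M q\<^esub>)
        \<longrightarrow> (\<exists>q. \<exists>y\<in>T q \<inter> N q. y \<noteq> \<zero>\<^bsub>comp M q\<^esub>))"

text \<open>M_\<tau> = M \<otimes> k[Q_+ + Z\<tau>] is realized concretely as the localization of M inverting the
  monomials x^f, f \<in> \<tau>: its degree-q part consists of fractions m / x^f with f \<in> \<tau> and
  m \<in> M_(q+f), where m/x^f = n/x^g iff x^(g+h) m = x^(f+h) n for some h \<in> \<tau>.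
  Fractions are represented by their equivalence classes (sets of pairs).\<close>

definition frac_rel :: "'q::ab_group_add set \<Rightarrow> ('q, 'k, 'v, 'e) qmodule_scheme \<Rightarrow> 'q
     \<Rightarrow> (('q \<times> 'v) \<times> ('q \<times> 'v)) set" where
  "frac_rel \<tau> M q = {((f, m), (g, n)). f \<in> \<tau> \<and> g \<in> \<tau> \<and> m \<in> carrier (comp M (q + f))
       \<and> n \<in> carrier (comp M (q + g))
       \<and> (\<exists>h\<in>\<tau>. smap M (q + f) (q + f + g + h) m = smap M (q + g) (q + f + g + h) n)}"

definition frac :: "'q::ab_group_add set \<Rightarrow> ('q, 'k, 'v, 'e) qmodule_scheme \<Rightarrow> 'q
     \<Rightarrow> 'q \<Rightarrow> 'v \<Rightarrow> ('q \<times> 'v) set" where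
  "frac \<tau> M q f m = frac_rel \<tau> M q `` {(f, m)}"

definition loc_comp :: "'q::ab_group_add set \<Rightarrow> ('q, 'k, 'v, 'e) qmodule_scheme \<Rightarrow> 'q
     \<Rightarrow> ('k, ('q \<times> 'v) set) module" where
  "loc_comp \<tau> M q =
     \<lparr> carrier = {frac \<tau> M q f m |f m. f \<in> \<tau> \<and> m \<in> carrier (comp M (q + f))},
       mult = (\<lambda>_ _. undefined), one = undefined,
       zero = frac \<tau> M q 0 \<zero>\<^bsub>comp M (q + 0)\<^esub>,
       add = (\<lambda>A B. \<Union>{frac \<tau> M q (f + g)
                  (smap M (q + f) (q + (f + g)) m \<oplus>\<^bsub>comp M (q + (f + g))\<^esub> smap M (q + g) (q + (f + g)) n)
                  |f m g n. (f, m) \<in> A \<and> (g, n) \<in> B}),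
       smult = (\<lambda>c A. \<Union>{frac \<tau> M q f (c \<odot>\<^bsub>comp M (q + f)\<^esub> m) |f m. (f, m) \<in> A}) \<rparr>"

definition loc :: "'q::ab_group_add set \<Rightarrow> ('q, 'k, 'v, 'e) qmodule_scheme
     \<Rightarrow> ('q, 'k, ('q \<times> 'v) set) qmodule" where
  "loc \<tau> M = \<lparr> comp = loc_comp \<tau> M,
       smap = (\<lambda>q q' A. \<Union>{frac \<tau> M q' f (smap M (q + f) (q' + f) m) |f m. (f, m) \<in> A}) \<rparr>"

definition locmap :: "'q::ab_group_add set \<Rightarrow> ('q, 'k, 'v, 'e) qmodule_scheme \<Rightarrow> 'q
     \<Rightarrow> 'v \<Rightarrow> ('q \<times> 'v) set" where
  "locmap \<tau> M q m = frac \<tau> M q 0 (smap M q (q + 0) m)"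

definition Gamma :: "'q::ab_group_add set \<Rightarrow> 'q set \<Rightarrow> ('q, 'k, 'v, 'e) qmodule_scheme
     \<Rightarrow> 'q \<Rightarrow> 'v set" where
  "Gamma P \<tau> M q = {y \<in> carrier (comp M q). \<forall>\<tau>'. face P \<tau>' \<and> \<not> \<tau>' \<subseteq> \<tau> \<longrightarrow>
       locmap \<tau>' M q y = \<zero>\<^bsub>comp (loc \<tau>' M) q\<^esub>}"

definition coprimary_module :: "'q::ab_group_add set \<Rightarrow> ('k, 'z) ring_scheme \<Rightarrow> 'q set
     \<Rightarrow> ('q, 'k, 'v, 'e) qmodule_scheme \<Rightarrow> bool" where
  "coprimary_module P K \<tau> M \<longleftrightarrow>
     (\<forall>q. inj_on (locmap \<tau> M q) (carrier (comp M q)))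
     \<and> essential P K (loc \<tau> M) (Gamma P \<tau> (loc \<tau> M))"

fun ntimes :: "nat \<Rightarrow> 'a::monoid_add \<Rightarrow> 'a" where
  "ntimes 0 f = 0"
| "ntimes (Suc n) f = f + ntimes n f"

definition persistent :: "'q::ab_group_add set \<Rightarrow> ('q, 'k, 'v, 'e) qmodule_scheme \<Rightarrow> 'q \<Rightarrow> 'v \<Rightarrow> bool" where
  "persistent \<tau> M q y \<longleftrightarrow> (\<forall>f\<in>\<tau>. smap M q (q + f) y \<noteq> \<zero>\<^bsub>comp M (q + f)\<^esub>)"

definition transient :: "'q::ab_group_add set \<Rightarrow> 'q set \<Rightarrow> ('q, 'k, 'v, 'e) qmodule_scheme \<Rightarrow> 'q \<Rightarrow> 'v \<Rightarrow> bool" where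
  "transient P \<tau> M q y \<longleftrightarrow> (\<forall>f\<in>P - \<tau>. \<exists>N. \<forall>n\<ge>N.
       smap M q (q + ntimes n f) y = \<zero>\<^bsub>comp M (q + ntimes n f)\<^esub>)"

definition coprimary_elem :: "'q::ab_group_add set \<Rightarrow> 'q set \<Rightarrow> ('q, 'k, 'v, 'e) qmodule_scheme \<Rightarrow> 'q \<Rightarrow> 'v \<Rightarrow> bool" where
  "coprimary_elem P \<tau> M q y \<longleftrightarrow> y \<in> carrier (comp M q) \<and> persistent \<tau> M q y \<and> transient P \<tau> M q y"

definition divides :: "'q::ab_group_add set \<Rightarrow> ('q, 'k, 'v, 'e) qmodule_scheme \<Rightarrow> 'q \<Rightarrow> 'v \<Rightarrow> 'q \<Rightarrow> 'v \<Rightarrow> bool" where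
  "divides P M q y q' y' \<longleftrightarrow> pleq P q q' \<and> y \<in> carrier (comp M q) \<and> y' \<in> carrier (comp M q')
     \<and> smap M q q' y = y'"

end

theory Submission
  imports Defs
begin

(* Injectivity of M -> M_tau means that every nonzero homogeneous element is tau-persistent,
   and divisors of persistent elements are persistent.  For y in M_q, y/1 is nonzero iff y is
   tau-persistent, and y/1 lies in Gamma_tau(M_tau) iff along every face sigma not contained
   in tau some x^(g + h) with g in sigma, h in tau kills y; for h = 0 this is tau-transience,
   because every f outside tau lies in such a face, the one it generates.  So if every nonzero
   element divides a coprimary one, a nonzero m/x^f in a graded submodule of M_tau has a
   multiple y'/1 that is nonzero and lies in Gamma_tau, making Gamma_tau(M_tau) essential.
   Conversely, essentiality applied to the submodule generated by y/1 gives a multiple u of y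
   with u/1 nonzero in Gamma_tau, and multiplying u by x^H, where H sums the finitely many
   tau-degrees h (one per face), makes it coprimary. *)

section \<open>Partial orders from submonoids\<close>

lemma pogroup_submonoid: "pogroup P \<Longrightarrow> submonoid P"
  by (simp add: pogroup_def)

lemma face_subset: "face P \<sigma> \<Longrightarrow> \<sigma> \<subseteq> P"
  and face_submonoid: "face P \<sigma> \<Longrightarrow> submonoid \<sigma>"
  by (simp_all add: face_def)

lemma submonoid_zero: "submonoid S \<Longrightarrow> 0 \<in> S"
  and submonoid_add: "submonoid S \<Longrightarrow> a \<in> S \<Longrightarrow> b \<in> S \<Longrightarrow> a + b \<in> S"
  by (simp_all add: submonoid_def)

lemma submonoid_sum: "submonoid S \<Longrightarrow> (\<And>i. i \<in> I \<Longrightarrow> h i \<in> S) \<Longrightarrow> sum h I \<in> S"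
  by (induction I rule: infinite_finite_induct) (simp_all add: submonoid_zero submonoid_add)

lemma submonoid_ntimes: "submonoid S \<Longrightarrow> f \<in> S \<Longrightarrow> ntimes n f \<in> S"
  by (induction n) (simp_all add: submonoid_zero submonoid_add)

lemma ntimes_add: "ntimes (a + b) f = ntimes a f + ntimes b f"
  by (induction a) (simp_all add: add.assoc)

lemma pleq_refl: "submonoid S \<Longrightarrow> pleq S a a"
  by (simp add: pleq_def submonoid_zero)

lemma pleq_trans: "submonoid S \<Longrightarrow> pleq S a b \<Longrightarrow> pleq S b c \<Longrightarrow> pleq S a c"
  unfolding pleq_def by (metis submonoid_add diff_add_cancel add_diff_eq)

lemma pleq_mem: "submonoid S \<Longrightarrow> a \<in> S \<Longrightarrow> pleq S a b \<Longrightarrow> b \<in> S"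
  unfolding pleq_def by (metis submonoid_add diff_add_cancel add.commute)

lemma pleq_zero_iff [simp]: "pleq S 0 f \<longleftrightarrow> f \<in> S"
  by (simp add: pleq_def)

lemma pleq_add_left_iff [simp]: "pleq S (c + a) (c + b) \<longleftrightarrow> pleq S a b"
  by (simp add: pleq_def)

lemma pleq_add_self_iff [simp]: "pleq S a (a + d) \<longleftrightarrow> d \<in> S"
  by (simp add: pleq_def)

lemma pleq_add_right: "pleq S a b \<Longrightarrow> pleq S (a + c) (b + c)"
  by (simp add: pleq_def)

lemma pleq_subset: "S \<subseteq> T \<Longrightarrow> pleq S a b \<Longrightarrow> pleq T a b"
  by (auto simp: pleq_def)

lemma pleq_add:
  assumes "submonoid S" "pleq S a b" "pleq S c d"
  shows "pleq S (a + c) (b + d)"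
proof -
  have "(b + d) - (a + c) = (b - a) + (d - c)" by (simp add: algebra_simps)
  then show ?thesis using assms unfolding pleq_def by (metis submonoid_add)
qed

lemma face_below_multiples:
  assumes P: "submonoid P" and f: "f \<in> P"
  shows "face P {x \<in> P. \<exists>n. pleq P x (ntimes n f)}"
  unfolding face_def submonoid_def
proof (intro conjI ballI)
  show "0 \<in> {x \<in> P. \<exists>n. pleq P x (ntimes n f)}"
    using P by (auto simp: submonoid_zero intro!: exI[of _ 0] pleq_refl)
next
  fix a b
  assume a: "a \<in> {x \<in> P. \<exists>n. pleq P x (ntimes n f)}" and b: "b \<in> {x \<in> P. \<exists>n. pleq P x (ntimes n f)}"
  then obtain n k where "pleq P a (ntimes n f)" "pleq P b (ntimes k f)" by blast
  then have "pleq P (a + b) (ntimes (n + k) f)" by (simp add: ntimes_add pleq_add P)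
  then show "a + b \<in> {x \<in> P. \<exists>n. pleq P x (ntimes n f)}" using a b P by (auto simp: submonoid_add)
next
  fix a b assume a: "a \<in> P - {x \<in> P. \<exists>n. pleq P x (ntimes n f)}" and b: "b \<in> P"
  have "\<not> pleq P (a + b) (ntimes n f)" for n
    using a pleq_trans[OF P, of a "a + b" "ntimes n f"] b by auto
  then show "a + b \<in> P - {x \<in> P. \<exists>n. pleq P x (ntimes n f)}" using a b P by (auto simp: submonoid_add)
qed auto

section \<open>Linear maps and submodules\<close>

lemma klinear_zero:
  assumes V: "module K V" and W: "module K W" and f: "klinear K V W f"
  shows "f \<zero>\<^bsub>V\<^esub> = \<zero>\<^bsub>W\<^esub>"
proof -
  interpret V: module K V by (fact V)
  interpret W: module K W by (fact W)
  have "f \<zero>\<^bsub>V\<^esub> \<in> carrier W" using f by (simp add: klinear_def)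
  have "f \<zero>\<^bsub>V\<^esub> = f (\<zero>\<^bsub>K\<^esub> \<odot>\<^bsub>V\<^esub> \<zero>\<^bsub>V\<^esub>)" by simp
  also have "\<dots> = \<zero>\<^bsub>K\<^esub> \<odot>\<^bsub>W\<^esub> f \<zero>\<^bsub>V\<^esub>"
    using f unfolding klinear_def by (metis V.R.zero_closed V.M.zero_closed)
  also have "\<dots> = \<zero>\<^bsub>W\<^esub>" using \<open>f \<zero>\<^bsub>V\<^esub> \<in> carrier W\<close> by simp
  finally show ?thesis .
qed

lemma klinear_a_inv:
  assumes V: "module K V" and W: "module K W" and f: "klinear K V W f" and x: "x \<in> carrier V"
  shows "f (\<ominus>\<^bsub>V\<^esub> x) = \<ominus>\<^bsub>W\<^esub> f x"
proof -
  interpret V: module K V by (fact V)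
  interpret W: module K W by (fact W)
  have "f (\<ominus>\<^bsub>V\<^esub> x) = f ((\<ominus>\<^bsub>K\<^esub> \<one>\<^bsub>K\<^esub>) \<odot>\<^bsub>V\<^esub> x)" using x by (simp add: V.smult_l_minus)
  also have "\<dots> = (\<ominus>\<^bsub>K\<^esub> \<one>\<^bsub>K\<^esub>) \<odot>\<^bsub>W\<^esub> f x" using f x by (simp add: klinear_def)
  also have "\<dots> = \<ominus>\<^bsub>W\<^esub> f x" using f x by (simp add: klinear_def W.smult_l_minus)
  finally show ?thesis .
qed

lemma klinear_inj_on_iff:
  assumes V: "module K V" and W: "module K W" and f: "klinear K V W f"
  shows "inj_on f (carrier V) \<longleftrightarrow> (\<forall>x\<in>carrier V. f x = \<zero>\<^bsub>W\<^esub> \<longrightarrow> x = \<zero>\<^bsub>V\<^esub>)"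
proof
  interpret V: module K V by (fact V)
  show "inj_on f (carrier V) \<Longrightarrow> \<forall>x\<in>carrier V. f x = \<zero>\<^bsub>W\<^esub> \<longrightarrow> x = \<zero>\<^bsub>V\<^esub>"
    using klinear_zero[OF V W f] by (metis inj_onD V.zero_closed)
next
  interpret V: module K V by (fact V)
  interpret W: module K W by (fact W)
  assume ker: "\<forall>x\<in>carrier V. f x = \<zero>\<^bsub>W\<^esub> \<longrightarrow> x = \<zero>\<^bsub>V\<^esub>"
  show "inj_on f (carrier V)"
  proof (rule inj_onI)
    fix x y assume x: "x \<in> carrier V" and y: "y \<in> carrier V" and eq: "f x = f y"
    have "f (x \<oplus>\<^bsub>V\<^esub> \<ominus>\<^bsub>V\<^esub> y) = f x \<oplus>\<^bsub>W\<^esub> \<ominus>\<^bsub>W\<^esub> f y"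
      using f x y klinear_a_inv[OF V W f y] by (simp add: klinear_def)
    also have "\<dots> = \<zero>\<^bsub>W\<^esub>" using eq f y by (simp add: klinear_def W.r_neg)
    finally have "x \<oplus>\<^bsub>V\<^esub> \<ominus>\<^bsub>V\<^esub> y = \<zero>\<^bsub>V\<^esub>" using ker x y by simp
    then have "\<ominus>\<^bsub>V\<^esub> (\<ominus>\<^bsub>V\<^esub> y) = x" using x y by (intro V.minus_equality) simp_all
    then show "x = y" using y by simp
  qed
qed

lemma submodule_image:
  assumes V: "module K V" and W: "module K W" and f: "klinear K V W f" and H: "submodule H K V"
  shows "submodule (f ` H) K W"
proof -
  interpret V: module K V by (fact V)
  interpret W: module K W by (fact W)
  have sub: "H \<subseteq> carrier V" using V.submoduleE(1)[OF H] .
  have closed: "\<And>x. x \<in> carrier V \<Longrightarrow> f x \<in> carrier W"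
    and add: "\<And>x y. x \<in> carrier V \<Longrightarrow> y \<in> carrier V \<Longrightarrow> f (x \<oplus>\<^bsub>V\<^esub> y) = f x \<oplus>\<^bsub>W\<^esub> f y"
    and smult: "\<And>c x. c \<in> carrier K \<Longrightarrow> x \<in> carrier V \<Longrightarrow> f (c \<odot>\<^bsub>V\<^esub> x) = c \<odot>\<^bsub>W\<^esub> f x"
    using f by (simp_all add: klinear_def)
  show ?thesis
  proof (rule W.submoduleI)
    show "f ` H \<subseteq> carrier W" using closed sub by auto
    have "\<zero>\<^bsub>V\<^esub> \<in> H" using subgroup.one_closed[OF submodule.axioms(1)[OF H]] by simp
    then show "\<zero>\<^bsub>W\<^esub> \<in> f ` H" using klinear_zero[OF V W f] by (metis image_eqI)
  next
    fix a assume "a \<in> f ` H"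
    then obtain x where "x \<in> H" "a = f x" by blast
    then have "\<ominus>\<^bsub>W\<^esub> a = f (\<ominus>\<^bsub>V\<^esub> x)" using klinear_a_inv[OF V W f] sub by (simp add: subset_iff)
    then show "\<ominus>\<^bsub>W\<^esub> a \<in> f ` H" using V.submoduleE(3)[OF H \<open>x \<in> H\<close>] by (rule image_eqI)
  next
    fix a b assume "a \<in> f ` H" "b \<in> f ` H"
    then obtain x y where "x \<in> H" "y \<in> H" "a = f x" "b = f y" by blast
    then have "a \<oplus>\<^bsub>W\<^esub> b = f (x \<oplus>\<^bsub>V\<^esub> y)" using add sub by (simp add: subset_iff)
    then show "a \<oplus>\<^bsub>W\<^esub> b \<in> f ` H"
      using V.submoduleE(5)[OF H \<open>x \<in> H\<close> \<open>y \<in> H\<close>] by (rule image_eqI)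
  next
    fix c a assume "c \<in> carrier K" "a \<in> f ` H"
    then obtain x where "x \<in> H" "a = f x" by blast
    then have "c \<odot>\<^bsub>W\<^esub> a = f (c \<odot>\<^bsub>V\<^esub> x)" using smult sub \<open>c \<in> carrier K\<close> by (simp add: subset_iff)
    then show "c \<odot>\<^bsub>W\<^esub> a \<in> f ` H"
      using V.submoduleE(4)[OF H \<open>c \<in> carrier K\<close> \<open>x \<in> H\<close>] by (rule image_eqI)
  qed
qed

lemma (in module) submodule_scalar_multiples:
  assumes "w \<in> carrier M"
  shows "submodule {c \<odot>\<^bsub>M\<^esub> w |c. c \<in> carrier R} R M"
proof (rule submoduleI)
  show "\<zero>\<^bsub>M\<^esub> \<in> {c \<odot>\<^bsub>M\<^esub> w |c. c \<in> carrier R}"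
    using assms by (auto intro!: exI[of _ \<zero>])
next
  fix a assume "a \<in> {c \<odot>\<^bsub>M\<^esub> w |c. c \<in> carrier R}"
  then obtain c where "c \<in> carrier R" "a = c \<odot>\<^bsub>M\<^esub> w" by blast
  then show "\<ominus>\<^bsub>M\<^esub> a \<in> {c \<odot>\<^bsub>M\<^esub> w |c. c \<in> carrier R}"
    using assms smult_l_minus by (auto intro!: exI[of _ "\<ominus> c"])
next
  fix a b assume "a \<in> {c \<odot>\<^bsub>M\<^esub> w |c. c \<in> carrier R}" "b \<in> {c \<odot>\<^bsub>M\<^esub> w |c. c \<in> carrier R}"
  then obtain c d where "c \<in> carrier R" "a = c \<odot>\<^bsub>M\<^esub> w" "d \<in> carrier R" "b = d \<odot>\<^bsub>M\<^esub> w" by blast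
  then show "a \<oplus>\<^bsub>M\<^esub> b \<in> {c \<odot>\<^bsub>M\<^esub> w |c. c \<in> carrier R}"
    using assms by (auto simp: smult_l_distr[symmetric] intro!: exI[of _ "c \<oplus> d"])
next
  fix d a assume "d \<in> carrier R" "a \<in> {c \<odot>\<^bsub>M\<^esub> w |c. c \<in> carrier R}"
  then obtain c where "c \<in> carrier R" "a = c \<odot>\<^bsub>M\<^esub> w" by blast
  then show "d \<odot>\<^bsub>M\<^esub> a \<in> {c \<odot>\<^bsub>M\<^esub> w |c. c \<in> carrier R}"
    using assms \<open>d \<in> carrier R\<close> by (auto simp: smult_assoc1[symmetric] intro!: exI[of _ "d \<otimes> c"])
qed (use assms in auto)

lemma submodule_smult_cancel:
  assumes K: "field K" and V: "module K V" and H: "submodule H K V"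
    and c: "c \<in> carrier K" "c \<noteq> \<zero>\<^bsub>K\<^esub>" and x: "x \<in> carrier V" and cx: "c \<odot>\<^bsub>V\<^esub> x \<in> H"
  shows "x \<in> H"
proof -
  interpret K: field K by (fact K)
  interpret V: module K V by (fact V)
  have cU: "c \<in> Units K" using c K.field_Units by blast
  have "x = (inv\<^bsub>K\<^esub> c \<otimes>\<^bsub>K\<^esub> c) \<odot>\<^bsub>V\<^esub> x" using K.Units_l_inv[OF cU] x by simp
  also have "\<dots> = inv\<^bsub>K\<^esub> c \<odot>\<^bsub>V\<^esub> (c \<odot>\<^bsub>V\<^esub> x)" using V.smult_assoc1[OF K.Units_inv_closed[OF cU] c(1) x] .
  finally show ?thesis using V.submoduleE(4)[OF H K.Units_inv_closed[OF cU] cx] by simp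
qed

section \<open>Q-modules\<close>

definition qhom :: "'q::ab_group_add set \<Rightarrow> ('k, 'z) ring_scheme \<Rightarrow> ('q, 'k, 'v, 'e) qmodule_scheme
    \<Rightarrow> ('q, 'k, 'w, 'f) qmodule_scheme \<Rightarrow> ('q \<Rightarrow> 'v \<Rightarrow> 'w) \<Rightarrow> bool" where
  "qhom P K M N \<phi> \<longleftrightarrow> (\<forall>q. klinear K (comp M q) (comp N q) (\<phi> q))
     \<and> (\<forall>q q'. pleq P q q' \<longrightarrow> (\<forall>x\<in>carrier (comp M q). \<phi> q' (smap M q q' x) = smap N q q' (\<phi> q x)))"

lemma graded_submodule_image:
  assumes M: "is_qmodule P K M" and N: "is_qmodule P K N" and \<phi>: "qhom P K M N \<phi>"
    and T: "graded_submodule P K M T"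
  shows "graded_submodule P K N (\<lambda>q. \<phi> q ` T q)"
  unfolding graded_submodule_def
proof (intro conjI allI impI ballI)
  fix q
  have "submodule (T q) K (comp M q)" using T by (simp add: graded_submodule_def)
  then show "submodule (\<phi> q ` T q) K (comp N q)"
    by (rule submodule_image[rotated 3]) (use M N \<phi> in \<open>simp_all add: is_qmodule_def qhom_def\<close>)
next
  fix q q' y assume qq': "pleq P q q'" and "y \<in> \<phi> q ` T q"
  then obtain x where x: "x \<in> T q" "y = \<phi> q x" by blast
  have "x \<in> carrier (comp M q)"
    using x(1) T M module.submoduleE(1) by (fastforce simp: graded_submodule_def is_qmodule_def)
  then have "smap N q q' y = \<phi> q' (smap M q q' x)" using \<phi> qq' x(2) by (simp add: qhom_def)
  moreover have "smap M q q' x \<in> T q'" using T qq' x(1) by (simp add: graded_submodule_def)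
  ultimately show "smap N q q' y \<in> \<phi> q' ` T q'" by simp
qed

locale q_module =
  fixes P :: "'q::ab_group_add set" and K :: "('k, 'z) ring_scheme"
    and M :: "('q, 'k, 'v, 'e) qmodule_scheme"
  assumes P_submonoid: "submonoid P" and is_qmodule: "is_qmodule P K M"
begin

lemma module_comp: "module K (comp M q)"
  using is_qmodule by (simp add: is_qmodule_def)

lemma zero_closed: "\<zero>\<^bsub>comp M q\<^esub> \<in> carrier (comp M q)"
proof -
  interpret module K "comp M q" by (rule module_comp)
  show ?thesis by simp
qed

lemma smap_klinear: "pleq P a b \<Longrightarrow> klinear K (comp M a) (comp M b) (smap M a b)"
  using is_qmodule by (simp add: is_qmodule_def)

lemma smap_closed: "pleq P a b \<Longrightarrow> x \<in> carrier (comp M a) \<Longrightarrow> smap M a b x \<in> carrier (comp M b)"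
  using smap_klinear by (simp add: klinear_def)

lemma smap_add:
  "pleq P a b \<Longrightarrow> x \<in> carrier (comp M a) \<Longrightarrow> y \<in> carrier (comp M a) \<Longrightarrow>
    smap M a b (x \<oplus>\<^bsub>comp M a\<^esub> y) = smap M a b x \<oplus>\<^bsub>comp M b\<^esub> smap M a b y"
  using smap_klinear by (simp add: klinear_def)

lemma smap_smult:
  "pleq P a b \<Longrightarrow> c \<in> carrier K \<Longrightarrow> x \<in> carrier (comp M a) \<Longrightarrow>
    smap M a b (c \<odot>\<^bsub>comp M a\<^esub> x) = c \<odot>\<^bsub>comp M b\<^esub> smap M a b x"
  using smap_klinear by (simp add: klinear_def)

lemma smap_zero: "pleq P a b \<Longrightarrow> smap M a b \<zero>\<^bsub>comp M a\<^esub> = \<zero>\<^bsub>comp M b\<^esub>"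
  using klinear_zero module_comp smap_klinear by blast

lemma smap_id: "x \<in> carrier (comp M a) \<Longrightarrow> smap M a a x = x"
  using is_qmodule by (simp add: is_qmodule_def)

lemma smap_trans:
  "pleq P a b \<Longrightarrow> pleq P b c \<Longrightarrow> x \<in> carrier (comp M a) \<Longrightarrow> smap M b c (smap M a b x) = smap M a c x"
  using is_qmodule by (simp add: is_qmodule_def)

lemma smap_agree_mono:
  assumes "x \<in> carrier (comp M a)" "x' \<in> carrier (comp M a')" "pleq P a b" "pleq P a' b"
    and "smap M a b x = smap M a' b x'" and "pleq P b c"
  shows "smap M a c x = smap M a' c x'"
  by (metis assms smap_trans)

lemma smap_eq_zero_mono:
  assumes "x \<in> carrier (comp M a)" "pleq P a b" "smap M a b x = \<zero>\<^bsub>comp M b\<^esub>" "pleq P b c"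
  shows "smap M a c x = \<zero>\<^bsub>comp M c\<^esub>"
  by (metis assms smap_trans smap_zero)

lemma graded_submodule_generated:
  assumes y: "y \<in> carrier (comp M q)"
  shows "graded_submodule P K M
    (\<lambda>q'. {c \<odot>\<^bsub>comp M q'\<^esub> (if pleq P q q' then smap M q q' y else \<zero>\<^bsub>comp M q'\<^esub>) |c. c \<in> carrier K})"
    (is "graded_submodule P K M (\<lambda>q'. {c \<odot>\<^bsub>comp M q'\<^esub> ?w q' |c. c \<in> carrier K})")
  unfolding graded_submodule_def
proof (intro conjI allI impI ballI)
  fix q'
  interpret module K "comp M q'" by (rule module_comp)
  show "submodule {c \<odot>\<^bsub>comp M q'\<^esub> ?w q' |c. c \<in> carrier K} K (comp M q')"
    using smap_closed y by (intro submodule_scalar_multiples) simp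
next
  fix q' q'' x assume q'q'': "pleq P q' q''" and "x \<in> {c \<odot>\<^bsub>comp M q'\<^esub> ?w q' |c. c \<in> carrier K}"
  then obtain c where c: "c \<in> carrier K" and x: "x = c \<odot>\<^bsub>comp M q'\<^esub> ?w q'" by blast
  interpret M': module K "comp M q'" by (rule module_comp)
  interpret M'': module K "comp M q''" by (rule module_comp)
  have "smap M q' q'' x = c \<odot>\<^bsub>comp M q''\<^esub> smap M q' q'' (?w q')"
    using x c smap_smult[OF q'q''] smap_closed y by simp
  also have "\<dots> = (if pleq P q q' then c else \<zero>\<^bsub>K\<^esub>) \<odot>\<^bsub>comp M q''\<^esub> ?w q''"
    using c y smap_zero[OF q'q''] smap_trans[OF _ q'q''] smap_closed pleq_trans[OF P_submonoid _ q'q'']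
    by auto
  finally have "smap M q' q'' x = (if pleq P q q' then c else \<zero>\<^bsub>K\<^esub>) \<odot>\<^bsub>comp M q''\<^esub> ?w q''" .
  moreover have "(if pleq P q q' then c else \<zero>\<^bsub>K\<^esub>) \<in> carrier K" using c by simp
  ultimately show "smap M q' q'' x \<in> {c \<odot>\<^bsub>comp M q''\<^esub> ?w q'' |c. c \<in> carrier K}"
    by blast
qed

lemma graded_submodule_common_kernel:
  fixes N :: "'i \<Rightarrow> ('q, 'k, 'w, 'f) qmodule_scheme" and \<phi> :: "'i \<Rightarrow> 'q \<Rightarrow> 'v \<Rightarrow> 'w"
  assumes N: "\<And>i. i \<in> I \<Longrightarrow> is_qmodule P K (N i)" and \<phi>: "\<And>i. i \<in> I \<Longrightarrow> qhom P K M (N i) (\<phi> i)"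
  shows "graded_submodule P K M (\<lambda>q. {x \<in> carrier (comp M q). \<forall>i\<in>I. \<phi> i q x = \<zero>\<^bsub>comp (N i) q\<^esub>})"
  unfolding graded_submodule_def
proof (intro conjI allI impI ballI)
  fix q
  interpret module K "comp M q" by (rule module_comp)
  have Nq: "module K (comp (N i) q)" if "i \<in> I" for i using N that by (simp add: is_qmodule_def)
  have lin: "klinear K (comp M q) (comp (N i) q) (\<phi> i q)" if "i \<in> I" for i
    using \<phi> that by (simp add: qhom_def)
  let ?Z = "{x \<in> carrier (comp M q). \<forall>i\<in>I. \<phi> i q x = \<zero>\<^bsub>comp (N i) q\<^esub>}"
  have smult: "c \<odot>\<^bsub>comp M q\<^esub> a \<in> ?Z" if c: "c \<in> carrier K" and a: "a \<in> ?Z" for c a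
  proof -
    have "\<phi> i q (c \<odot>\<^bsub>comp M q\<^esub> a) = \<zero>\<^bsub>comp (N i) q\<^esub>" if i: "i \<in> I" for i
    proof -
      interpret Ni: module K "comp (N i) q" by (rule Nq[OF i])
      show ?thesis using lin[OF i] c a i by (simp add: klinear_def)
    qed
    then show ?thesis using c a by simp
  qed
  show "submodule ?Z K (comp M q)"
  proof (rule submoduleI)
    show "\<zero>\<^bsub>comp M q\<^esub> \<in> ?Z"
      using klinear_zero[OF module_comp Nq lin] by simp
  next
    fix a assume "a \<in> ?Z"
    moreover have "\<ominus>\<^bsub>comp M q\<^esub> a = (\<ominus>\<^bsub>K\<^esub> \<one>\<^bsub>K\<^esub>) \<odot>\<^bsub>comp M q\<^esub> a"
      using \<open>a \<in> ?Z\<close> by (simp add: smult_l_minus)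
    ultimately show "\<ominus>\<^bsub>comp M q\<^esub> a \<in> ?Z" using smult by simp
  next
    fix a b assume "a \<in> ?Z" "b \<in> ?Z"
    moreover have "\<phi> i q (a \<oplus>\<^bsub>comp M q\<^esub> b) = \<zero>\<^bsub>comp (N i) q\<^esub>" if i: "i \<in> I" for i
    proof -
      interpret Ni: module K "comp (N i) q" by (rule Nq[OF i])
      show ?thesis using lin[OF i] \<open>a \<in> ?Z\<close> \<open>b \<in> ?Z\<close> i by (simp add: klinear_def)
    qed
    ultimately show "a \<oplus>\<^bsub>comp M q\<^esub> b \<in> ?Z" by simp
  next
    fix c a assume "c \<in> carrier K" "a \<in> ?Z"
    then show "c \<odot>\<^bsub>comp M q\<^esub> a \<in> ?Z" by (rule smult)
  qed auto
next
  fix q q' x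
  assume qq': "pleq P q q'" and x: "x \<in> {x \<in> carrier (comp M q). \<forall>i\<in>I. \<phi> i q x = \<zero>\<^bsub>comp (N i) q\<^esub>}"
  have "\<phi> i q' (smap M q q' x) = \<zero>\<^bsub>comp (N i) q'\<^esub>" if "i \<in> I" for i
    using \<phi>[OF that] qq' x that klinear_zero[of K "comp (N i) q" "comp (N i) q'" "smap (N i) q q'"] N[OF that]
    by (simp add: qhom_def is_qmodule_def)
  then show "smap M q q' x \<in> {x \<in> carrier (comp M q'). \<forall>i\<in>I. \<phi> i q' x = \<zero>\<^bsub>comp (N i) q'\<^esub>}"
    using smap_closed qq' x by simp
qed

lemma transient_killed_along_faces:
  assumes tr: "transient P \<tau> M q y" and \<sigma>: "face P \<sigma>" "\<not> \<sigma> \<subseteq> \<tau>"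
  shows "\<exists>g\<in>\<sigma>. smap M q (q + g) y = \<zero>\<^bsub>comp M (q + g)\<^esub>"
proof -
  obtain f where f: "f \<in> \<sigma>" "f \<notin> \<tau>" using \<sigma>(2) by blast
  then have "f \<in> P - \<tau>" using \<sigma>(1) face_subset by blast
  then obtain N where "smap M q (q + ntimes N f) y = \<zero>\<^bsub>comp M (q + ntimes N f)\<^esub>"
    using tr unfolding transient_def by blast
  moreover have "ntimes N f \<in> \<sigma>" using \<sigma>(1) f(1) face_submonoid submonoid_ntimes by blast
  ultimately show ?thesis by blast
qed

text \<open>Each \<open>f \<in> P - \<tau>\<close> lies in the face it generates, which is not contained in \<open>\<tau>\<close>; the
  paper uses the rays of a closed \<open>Q\<close> at this point.\<close>

lemma transient_if_killed_along_faces: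
  assumes y: "y \<in> carrier (comp M q)"
    and killed: "\<And>\<sigma>. face P \<sigma> \<Longrightarrow> \<not> \<sigma> \<subseteq> \<tau> \<Longrightarrow> \<exists>g\<in>\<sigma>. smap M q (q + g) y = \<zero>\<^bsub>comp M (q + g)\<^esub>"
  shows "transient P \<tau> M q y"
  unfolding transient_def
proof
  fix f assume f: "f \<in> P - \<tau>"
  define \<sigma> where "\<sigma> = {x \<in> P. \<exists>n. pleq P x (ntimes n f)}"
  have \<sigma>: "face P \<sigma>" unfolding \<sigma>_def using face_below_multiples P_submonoid f by blast
  have "f \<in> \<sigma>" unfolding \<sigma>_def using f pleq_refl[OF P_submonoid, of f] by (auto intro!: exI[of _ 1])
  then obtain g where g: "g \<in> \<sigma>" and zero: "smap M q (q + g) y = \<zero>\<^bsub>comp M (q + g)\<^esub>"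
    using killed \<sigma> f by blast
  obtain N where gP: "g \<in> P" and gN: "pleq P g (ntimes N f)" using g by (auto simp: \<sigma>_def)
  have "smap M q (q + ntimes n f) y = \<zero>\<^bsub>comp M (q + ntimes n f)\<^esub>" if "n \<ge> N" for n
  proof -
    have "ntimes n f = ntimes (n - N) f + ntimes N f" using ntimes_add[of "n - N" N f] that by simp
    then have "pleq P g (ntimes n f)"
      using pleq_add[OF P_submonoid _ gN, of 0 "ntimes (n - N) f"] submonoid_ntimes[OF P_submonoid] f
      by (simp add: pleq_def)
    then show ?thesis using smap_eq_zero_mono[OF y _ zero] gP by simp
  qed
  then show "\<exists>N. \<forall>n\<ge>N. smap M q (q + ntimes n f) y = \<zero>\<^bsub>comp M (q + ntimes n f)\<^esub>" by blast
qed

end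

section \<open>Localization along a submonoid\<close>

lemma Union_eq_constI: "c \<in> S \<Longrightarrow> (\<And>x. x \<in> S \<Longrightarrow> x = c) \<Longrightarrow> \<Union>S = c"
  by blast

locale q_localization = q_module +
  fixes \<tau> :: "'q::ab_group_add set"
  assumes \<tau>_subset: "\<tau> \<subseteq> P" and \<tau>_submonoid: "submonoid \<tau>"
begin

lemma pleq_offset: "pleq \<tau> f g \<Longrightarrow> pleq P (q + f) (q + g)"
  using \<tau>_subset by (simp add: pleq_subset)

lemma pleq_offset_add: "g \<in> \<tau> \<Longrightarrow> pleq P (q + f) (q + (f + g))"
  using \<tau>_subset by (auto simp: add.assoc[symmetric])

lemma frac_rel_iff:
  "((f, m), (g, n)) \<in> frac_rel \<tau> M q \<longleftrightarrow> f \<in> \<tau> \<and> g \<in> \<tau>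
     \<and> m \<in> carrier (comp M (q + f)) \<and> n \<in> carrier (comp M (q + g))
     \<and> (\<exists>F. pleq \<tau> f F \<and> pleq \<tau> g F \<and> smap M (q + f) (q + F) m = smap M (q + g) (q + F) n)"
proof
  assume "((f, m), (g, n)) \<in> frac_rel \<tau> M q"
  then obtain h where mem: "f \<in> \<tau>" "g \<in> \<tau>" "m \<in> carrier (comp M (q + f))" "n \<in> carrier (comp M (q + g))"
    and h: "h \<in> \<tau>" and eq: "smap M (q + f) (q + (f + (g + h))) m = smap M (q + g) (q + (f + (g + h))) n"
    unfolding frac_rel_def by (auto simp: add.assoc)
  have "pleq \<tau> f (f + (g + h))" using mem h \<tau>_submonoid by (simp add: submonoid_add)
  moreover have "pleq \<tau> g (g + (f + h))" using mem h \<tau>_submonoid by (simp add: submonoid_add)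
  ultimately have "pleq \<tau> f (f + (g + h))" "pleq \<tau> g (f + (g + h))" by (simp_all add: add.left_commute)
  then show "f \<in> \<tau> \<and> g \<in> \<tau> \<and> m \<in> carrier (comp M (q + f)) \<and> n \<in> carrier (comp M (q + g))
     \<and> (\<exists>F. pleq \<tau> f F \<and> pleq \<tau> g F \<and> smap M (q + f) (q + F) m = smap M (q + g) (q + F) n)"
    using mem eq by blast
next
  assume "f \<in> \<tau> \<and> g \<in> \<tau> \<and> m \<in> carrier (comp M (q + f)) \<and> n \<in> carrier (comp M (q + g))
     \<and> (\<exists>F. pleq \<tau> f F \<and> pleq \<tau> g F \<and> smap M (q + f) (q + F) m = smap M (q + g) (q + F) n)"
  then obtain F where mem: "f \<in> \<tau>" "g \<in> \<tau>" "m \<in> carrier (comp M (q + f))" "n \<in> carrier (comp M (q + g))"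
    and F: "pleq \<tau> f F" "pleq \<tau> g F" and eq: "smap M (q + f) (q + F) m = smap M (q + g) (q + F) n"
    by blast
  have "F \<in> \<tau>" using pleq_mem[OF \<tau>_submonoid mem(1) F(1)] .
  have "f + g \<in> P" using submonoid_add[OF \<tau>_submonoid mem(1,2)] \<tau>_subset by blast
  then have "pleq P (q + F) (q + f + g + F)" by (simp add: pleq_def algebra_simps)
  then have "smap M (q + f) (q + f + g + F) m = smap M (q + g) (q + f + g + F) n"
    using smap_agree_mono[OF mem(3,4) pleq_offset[OF F(1)] pleq_offset[OF F(2)] eq] by blast
  then show "((f, m), (g, n)) \<in> frac_rel \<tau> M q"
    unfolding frac_rel_def using mem \<open>F \<in> \<tau>\<close> by blast
qed

lemma frac_rel_refl: "f \<in> \<tau> \<Longrightarrow> m \<in> carrier (comp M (q + f)) \<Longrightarrow> ((f, m), (f, m)) \<in> frac_rel \<tau> M q"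
  using pleq_refl[OF \<tau>_submonoid] by (auto simp: frac_rel_iff)

lemma frac_rel_sym: "((f, m), (g, n)) \<in> frac_rel \<tau> M q \<Longrightarrow> ((g, n), (f, m)) \<in> frac_rel \<tau> M q"
  by (auto simp: frac_rel_iff)

lemma frac_rel_trans:
  assumes "((f, m), (g, n)) \<in> frac_rel \<tau> M q" and "((g, n), (k, p)) \<in> frac_rel \<tau> M q"
  shows "((f, m), (k, p)) \<in> frac_rel \<tau> M q"
proof -
  obtain F1 where mem: "f \<in> \<tau>" "g \<in> \<tau>" "m \<in> carrier (comp M (q + f))" "n \<in> carrier (comp M (q + g))"
    and F1: "pleq \<tau> f F1" "pleq \<tau> g F1" "smap M (q + f) (q + F1) m = smap M (q + g) (q + F1) n"
    using assms(1) by (auto simp: frac_rel_iff)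
  obtain F2 where mem': "k \<in> \<tau>" "p \<in> carrier (comp M (q + k))"
    and F2: "pleq \<tau> g F2" "pleq \<tau> k F2" "smap M (q + g) (q + F2) n = smap M (q + k) (q + F2) p"
    using assms(2) by (auto simp: frac_rel_iff)
  define F where "F = F1 + F2 - g"
  have "F - F1 = F2 - g" "F - F2 = F1 - g" by (simp_all add: F_def algebra_simps)
  then have F1F: "pleq \<tau> F1 F" and F2F: "pleq \<tau> F2 F" using F1(2) F2(1) by (simp_all add: pleq_def)
  have "smap M (q + f) (q + F) m = smap M (q + g) (q + F) n"
    using smap_agree_mono[OF mem(3,4) pleq_offset[OF F1(1)] pleq_offset[OF F1(2)] F1(3) pleq_offset[OF F1F]] .
  also have "\<dots> = smap M (q + k) (q + F) p"
    using smap_agree_mono[OF mem(4) mem'(2) pleq_offset[OF F2(1)] pleq_offset[OF F2(2)] F2(3) pleq_offset[OF F2F]] .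
  finally show ?thesis
    using mem mem' pleq_trans[OF \<tau>_submonoid F1(1) F1F] pleq_trans[OF \<tau>_submonoid F2(2) F2F]
    by (auto simp: frac_rel_iff)
qed

lemma mem_frac_iff: "X \<in> frac \<tau> M q f m \<longleftrightarrow> ((f, m), X) \<in> frac_rel \<tau> M q"
  by (simp add: frac_def)

lemma mem_fracE:
  assumes "(f', m') \<in> frac \<tau> M q f m"
  obtains F where "f' \<in> \<tau>" "m' \<in> carrier (comp M (q + f'))" "pleq \<tau> f F" "pleq \<tau> f' F"
    "smap M (q + f) (q + F) m = smap M (q + f') (q + F) m'"
  using assms unfolding mem_frac_iff frac_rel_iff by blast

lemma frac_eq_iff:
  assumes "f \<in> \<tau>" "m \<in> carrier (comp M (q + f))" "g \<in> \<tau>" "n \<in> carrier (comp M (q + g))"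
  shows "frac \<tau> M q f m = frac \<tau> M q g n \<longleftrightarrow>
    (\<exists>F. pleq \<tau> f F \<and> pleq \<tau> g F \<and> smap M (q + f) (q + F) m = smap M (q + g) (q + F) n)"
proof -
  have "frac \<tau> M q f m = frac \<tau> M q g n \<longleftrightarrow> ((f, m), (g, n)) \<in> frac_rel \<tau> M q"
  proof
    assume "frac \<tau> M q f m = frac \<tau> M q g n"
    then show "((f, m), (g, n)) \<in> frac_rel \<tau> M q"
      using frac_rel_refl[OF assms(3,4)] by (simp add: set_eq_iff mem_frac_iff)
  next
    assume "((f, m), (g, n)) \<in> frac_rel \<tau> M q"
    then show "frac \<tau> M q f m = frac \<tau> M q g n"
      unfolding set_eq_iff mem_frac_iff by (metis frac_rel_sym frac_rel_trans surj_pair)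
  qed
  then show ?thesis using assms by (simp add: frac_rel_iff)
qed

lemma frac_expand:
  assumes f: "f \<in> \<tau>" "m \<in> carrier (comp M (q + f))" and fg: "pleq \<tau> f g"
  shows "frac \<tau> M q f m = frac \<tau> M q g (smap M (q + f) (q + g) m)"
proof -
  have "g \<in> \<tau>" using pleq_mem[OF \<tau>_submonoid f(1) fg] .
  moreover have "smap M (q + f) (q + g) m \<in> carrier (comp M (q + g))"
    using smap_closed[OF pleq_offset[OF fg] f(2)] .
  ultimately show ?thesis
    using f fg smap_id pleq_refl[OF \<tau>_submonoid] by (subst frac_eq_iff) auto
qed

lemma loc_carrier:
  "carrier (comp (loc \<tau> M) q) = {frac \<tau> M q f m |f m. f \<in> \<tau> \<and> m \<in> carrier (comp M (q + f))}"
  by (simp add: loc_def loc_comp_def)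

lemma loc_carrierE:
  assumes "A \<in> carrier (comp (loc \<tau> M) q)"
  obtains f m where "f \<in> \<tau>" "m \<in> carrier (comp M (q + f))" "A = frac \<tau> M q f m"
  using assms by (auto simp: loc_carrier)

lemma frac_in_loc_carrier:
  "f \<in> \<tau> \<Longrightarrow> m \<in> carrier (comp M (q + f)) \<Longrightarrow> frac \<tau> M q f m \<in> carrier (comp (loc \<tau> M) q)"
  by (auto simp: loc_carrier)

lemma loc_zero: "\<zero>\<^bsub>comp (loc \<tau> M) q\<^esub> = frac \<tau> M q 0 \<zero>\<^bsub>comp M q\<^esub>"
  by (simp add: loc_def loc_comp_def)

lemma frac_eq_zero_iff:
  assumes "f \<in> \<tau>" "m \<in> carrier (comp M (q + f))"
  shows "frac \<tau> M q f m = \<zero>\<^bsub>comp (loc \<tau> M) q\<^esub> \<longleftrightarrow>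
    (\<exists>F. pleq \<tau> f F \<and> smap M (q + f) (q + F) m = \<zero>\<^bsub>comp M (q + F)\<^esub>)"
proof -
  have F: "F \<in> \<tau>" "smap M q (q + F) \<zero>\<^bsub>comp M q\<^esub> = \<zero>\<^bsub>comp M (q + F)\<^esub>" if "pleq \<tau> f F" for F
    using pleq_mem[OF \<tau>_submonoid assms(1) that] \<tau>_subset smap_zero by auto
  have "frac \<tau> M q f m = frac \<tau> M q 0 \<zero>\<^bsub>comp M q\<^esub> \<longleftrightarrow>
      (\<exists>F. pleq \<tau> f F \<and> pleq \<tau> 0 F \<and> smap M (q + f) (q + F) m = smap M q (q + F) \<zero>\<^bsub>comp M q\<^esub>)"
    using frac_eq_iff[of f m q 0 "\<zero>\<^bsub>comp M q\<^esub>"] assms zero_closed submonoid_zero[OF \<tau>_submonoid]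
    by simp
  then show ?thesis using F by (auto simp: loc_zero)
qed

lemma loc_zero_eq_frac: "f \<in> \<tau> \<Longrightarrow> \<zero>\<^bsub>comp (loc \<tau> M) q\<^esub> = frac \<tau> M q f \<zero>\<^bsub>comp M (q + f)\<^esub>"
  using frac_eq_zero_iff[of f "\<zero>\<^bsub>comp M (q + f)\<^esub>" q] smap_id[OF zero_closed] pleq_refl[OF \<tau>_submonoid]
  by (metis zero_closed)

lemma locmap_eq_frac: "y \<in> carrier (comp M q) \<Longrightarrow> locmap \<tau> M q y = frac \<tau> M q 0 y"
  by (simp add: locmap_def smap_id)

lemma locmap_eq_zero_iff:
  assumes "y \<in> carrier (comp M q)"
  shows "locmap \<tau> M q y = \<zero>\<^bsub>comp (loc \<tau> M) q\<^esub> \<longleftrightarrow> (\<exists>F\<in>\<tau>. smap M q (q + F) y = \<zero>\<^bsub>comp M (q + F)\<^esub>)"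
  using frac_eq_zero_iff[of 0 y q] assms unfolding Bex_def
  by (simp add: locmap_eq_frac submonoid_zero[OF \<tau>_submonoid])

lemma frac_sum_expand:
  assumes f: "f \<in> \<tau>" "m \<in> carrier (comp M (q + f))" and g: "g \<in> \<tau>" "n \<in> carrier (comp M (q + g))"
    and F: "pleq \<tau> (f + g) F"
  shows "frac \<tau> M q (f + g)
      (smap M (q + f) (q + (f + g)) m \<oplus>\<^bsub>comp M (q + (f + g))\<^esub> smap M (q + g) (q + (f + g)) n)
    = frac \<tau> M q F (smap M (q + f) (q + F) m \<oplus>\<^bsub>comp M (q + F)\<^esub> smap M (q + g) (q + F) n)"
proof -
  interpret Mfg: module K "comp M (q + (f + g))" by (rule module_comp)
  have fg: "pleq P (q + f) (q + (f + g))" "pleq P (q + g) (q + (f + g))"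
    using pleq_offset_add[OF g(1), of q f] pleq_offset_add[OF f(1), of q g] by (simp_all add: add.commute)
  have mn: "smap M (q + f) (q + (f + g)) m \<in> carrier (comp M (q + (f + g)))"
    "smap M (q + g) (q + (f + g)) n \<in> carrier (comp M (q + (f + g)))"
    using smap_closed fg f g by blast+
  show ?thesis
    using frac_expand[OF submonoid_add[OF \<tau>_submonoid f(1) g(1)] Mfg.add.m_closed[OF mn] F]
      smap_add[OF pleq_offset[OF F] mn] smap_trans[OF fg(1) pleq_offset[OF F] f(2)]
      smap_trans[OF fg(2) pleq_offset[OF F] g(2)]
    by simp
qed

text \<open>The operations of \<open>loc \<tau> M\<close> are unions over all representatives.  In the next three
  lemmas every representative gives the same fraction: two related representatives are
  expanded to a common denominator on which they agree.\<close>

lemma loc_add: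
  assumes f: "f \<in> \<tau>" "m \<in> carrier (comp M (q + f))" and g: "g \<in> \<tau>" "n \<in> carrier (comp M (q + g))"
  shows "frac \<tau> M q f m \<oplus>\<^bsub>comp (loc \<tau> M) q\<^esub> frac \<tau> M q g n = frac \<tau> M q (f + g)
    (smap M (q + f) (q + (f + g)) m \<oplus>\<^bsub>comp M (q + (f + g))\<^esub> smap M (q + g) (q + (f + g)) n)"
proof -
  have respects: "frac \<tau> M q (f' + g')
      (smap M (q + f') (q + (f' + g')) m' \<oplus>\<^bsub>comp M (q + (f' + g'))\<^esub> smap M (q + g') (q + (f' + g')) n')
    = frac \<tau> M q (f + g)
      (smap M (q + f) (q + (f + g)) m \<oplus>\<^bsub>comp M (q + (f + g))\<^esub> smap M (q + g) (q + (f + g)) n)"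
    if f'_rep: "(f', m') \<in> frac \<tau> M q f m" and g'_rep: "(g', n') \<in> frac \<tau> M q g n" for f' m' g' n'
  proof -
    obtain F1 where f': "f' \<in> \<tau>" "m' \<in> carrier (comp M (q + f'))"
      and F1: "pleq \<tau> f F1" "pleq \<tau> f' F1" "smap M (q + f) (q + F1) m = smap M (q + f') (q + F1) m'"
      using f'_rep by (rule mem_fracE)
    obtain F2 where g': "g' \<in> \<tau>" "n' \<in> carrier (comp M (q + g'))"
      and F2: "pleq \<tau> g F2" "pleq \<tau> g' F2" "smap M (q + g) (q + F2) n = smap M (q + g') (q + F2) n'"
      using g'_rep by (rule mem_fracE)
    have F1F: "pleq \<tau> F1 (F1 + F2)" using pleq_mem[OF \<tau>_submonoid g(1) F2(1)] by simp
    have "pleq \<tau> F2 (F2 + F1)" using pleq_mem[OF \<tau>_submonoid f(1) F1(1)] by simp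
    then have F2F: "pleq \<tau> F2 (F1 + F2)" by (simp add: add.commute)
    have "smap M (q + f) (q + (F1 + F2)) m = smap M (q + f') (q + (F1 + F2)) m'"
      using smap_agree_mono[OF f(2) f'(2) pleq_offset[OF F1(1)] pleq_offset[OF F1(2)] F1(3) pleq_offset[OF F1F]] .
    moreover have "smap M (q + g) (q + (F1 + F2)) n = smap M (q + g') (q + (F1 + F2)) n'"
      using smap_agree_mono[OF g(2) g'(2) pleq_offset[OF F2(1)] pleq_offset[OF F2(2)] F2(3) pleq_offset[OF F2F]] .
    ultimately show ?thesis
      using frac_sum_expand[OF f g pleq_add[OF \<tau>_submonoid F1(1) F2(1)]]
        frac_sum_expand[OF f' g' pleq_add[OF \<tau>_submonoid F1(2) F2(2)]]
      by simp
  qed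
  have refl: "(f, m) \<in> frac \<tau> M q f m" "(g, n) \<in> frac \<tau> M q g n"
    using frac_rel_refl f g by (simp_all add: mem_frac_iff)
  show ?thesis
    unfolding loc_def loc_comp_def
    by (simp, rule Union_eq_constI, (use refl in blast), (use respects in blast))
qed

lemma loc_smult:
  assumes f: "f \<in> \<tau>" "m \<in> carrier (comp M (q + f))" and c: "c \<in> carrier K"
  shows "c \<odot>\<^bsub>comp (loc \<tau> M) q\<^esub> frac \<tau> M q f m = frac \<tau> M q f (c \<odot>\<^bsub>comp M (q + f)\<^esub> m)"
proof -
  have expand: "frac \<tau> M q f (c \<odot>\<^bsub>comp M (q + f)\<^esub> m)
      = frac \<tau> M q F (c \<odot>\<^bsub>comp M (q + F)\<^esub> smap M (q + f) (q + F) m)"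
    if "f \<in> \<tau>" "m \<in> carrier (comp M (q + f))" "pleq \<tau> f F" for f m F
  proof -
    interpret module K "comp M (q + f)" by (rule module_comp)
    show ?thesis
      using frac_expand[of f "c \<odot>\<^bsub>comp M (q + f)\<^esub> m" q F] smap_smult[OF pleq_offset] that c by simp
  qed
  have respects: "frac \<tau> M q f' (c \<odot>\<^bsub>comp M (q + f')\<^esub> m') = frac \<tau> M q f (c \<odot>\<^bsub>comp M (q + f)\<^esub> m)"
    if f'_rep: "(f', m') \<in> frac \<tau> M q f m" for f' m'
  proof -
    obtain F where f': "f' \<in> \<tau>" "m' \<in> carrier (comp M (q + f'))"
      and F: "pleq \<tau> f F" "pleq \<tau> f' F" "smap M (q + f) (q + F) m = smap M (q + f') (q + F) m'"
      using f'_rep by (rule mem_fracE)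
    show ?thesis using expand[OF f F(1)] expand[OF f' F(2)] F(3) by simp
  qed
  have refl: "(f, m) \<in> frac \<tau> M q f m" using frac_rel_refl f by (simp add: mem_frac_iff)
  show ?thesis
    unfolding loc_def loc_comp_def
    by (simp, rule Union_eq_constI, (use refl in blast), (use respects in blast))
qed

lemma loc_smap:
  assumes f: "f \<in> \<tau>" "m \<in> carrier (comp M (q + f))" and qq': "pleq P q q'"
  shows "smap (loc \<tau> M) q q' (frac \<tau> M q f m) = frac \<tau> M q' f (smap M (q + f) (q' + f) m)"
proof -
  have expand: "frac \<tau> M q' f (smap M (q + f) (q' + f) m)
      = frac \<tau> M q' F (smap M (q + F) (q' + F) (smap M (q + f) (q + F) m))"
    if "f \<in> \<tau>" "m \<in> carrier (comp M (q + f))" "pleq \<tau> f F" for f m F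
  proof -
    have le: "pleq P (q + f) (q' + f)" "pleq P (q + F) (q' + F)" using qq' by (simp_all add: pleq_add_right)
    have "smap M (q' + f) (q' + F) (smap M (q + f) (q' + f) m) = smap M (q + f) (q' + F) m"
      using smap_trans[OF le(1) pleq_offset[OF that(3)] that(2)] .
    moreover have "smap M (q + F) (q' + F) (smap M (q + f) (q + F) m) = smap M (q + f) (q' + F) m"
      using smap_trans[OF pleq_offset[OF that(3)] le(2) that(2)] .
    ultimately show ?thesis
      using frac_expand[OF that(1) smap_closed[OF le(1) that(2)] that(3)] by simp
  qed
  have respects: "frac \<tau> M q' f' (smap M (q + f') (q' + f') m') = frac \<tau> M q' f (smap M (q + f) (q' + f) m)"
    if f'_rep: "(f', m') \<in> frac \<tau> M q f m" for f' m'
  proof -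
    obtain F where f': "f' \<in> \<tau>" "m' \<in> carrier (comp M (q + f'))"
      and F: "pleq \<tau> f F" "pleq \<tau> f' F" "smap M (q + f) (q + F) m = smap M (q + f') (q + F) m'"
      using f'_rep by (rule mem_fracE)
    show ?thesis using expand[OF f F(1)] expand[OF f' F(2)] F(3) by simp
  qed
  have refl: "(f, m) \<in> frac \<tau> M q f m" using frac_rel_refl f by (simp add: mem_frac_iff)
  show ?thesis
    unfolding loc_def loc_comp_def
    by (simp, rule Union_eq_constI, (use refl in blast), (use respects in blast))
qed

lemma loc_common_denom:
  assumes "finite S" "S \<subseteq> carrier (comp (loc \<tau> M) q)"
  shows "\<exists>F\<in>\<tau>. \<forall>A\<in>S. \<exists>m\<in>carrier (comp M (q + F)). A = frac \<tau> M q F m"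
  using assms
proof (induction S rule: finite_induct)
  case empty
  show ?case using submonoid_zero[OF \<tau>_submonoid] by blast
next
  case (insert A S)
  then obtain F where F: "F \<in> \<tau>" "\<forall>B\<in>S. \<exists>m\<in>carrier (comp M (q + F)). B = frac \<tau> M q F m"
    by blast
  have "A \<in> carrier (comp (loc \<tau> M) q)" using insert.prems by simp
  then obtain f m where f: "f \<in> \<tau>" "m \<in> carrier (comp M (q + f))" and A: "A = frac \<tau> M q f m"
    by (rule loc_carrierE)
  have le: "pleq \<tau> F (F + f)" "pleq \<tau> f (F + f)" using F(1) f(1) by (simp_all add: pleq_def)
  have "\<exists>m\<in>carrier (comp M (q + (F + f))). B = frac \<tau> M q (F + f) m" if B: "B \<in> insert A S" for B
  proof (cases "B = A")
    case True
    then show ?thesis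
      using A frac_expand[OF f le(2)] smap_closed[OF pleq_offset[OF le(2)] f(2)] by (intro bexI) auto
  next
    case False
    then obtain n where n: "n \<in> carrier (comp M (q + F))" "B = frac \<tau> M q F n" using F(2) B by blast
    then show ?thesis
      using frac_expand[OF F(1) n(1) le(1)] smap_closed[OF pleq_offset[OF le(1)] n(1)] by (intro bexI) auto
  qed
  then show ?case using submonoid_add[OF \<tau>_submonoid F(1) f(1)] by blast
qed

lemma loc_common_denom_pair:
  assumes "A \<in> carrier (comp (loc \<tau> M) q)" "B \<in> carrier (comp (loc \<tau> M) q)"
  obtains F m n where "F \<in> \<tau>" "m \<in> carrier (comp M (q + F))" "n \<in> carrier (comp M (q + F))"
    "A = frac \<tau> M q F m" "B = frac \<tau> M q F n"
proof -
  have "\<exists>F\<in>\<tau>. \<forall>D\<in>{A, B}. \<exists>m\<in>carrier (comp M (q + F)). D = frac \<tau> M q F m"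
    by (rule loc_common_denom) (use assms in auto)
  then obtain F where "F \<in> \<tau>" and F: "\<forall>D\<in>{A, B}. \<exists>m\<in>carrier (comp M (q + F)). D = frac \<tau> M q F m"
    by blast
  moreover obtain m where "m \<in> carrier (comp M (q + F))" "A = frac \<tau> M q F m" using F by blast
  moreover obtain n where "n \<in> carrier (comp M (q + F))" "B = frac \<tau> M q F n" using F by blast
  ultimately show ?thesis using that by blast
qed

lemma loc_add_same_denom:
  assumes "f \<in> \<tau>" "m \<in> carrier (comp M (q + f))" "n \<in> carrier (comp M (q + f))"
  shows "frac \<tau> M q f m \<oplus>\<^bsub>comp (loc \<tau> M) q\<^esub> frac \<tau> M q f n = frac \<tau> M q f (m \<oplus>\<^bsub>comp M (q + f)\<^esub> n)"
proof -
  interpret module K "comp M (q + f)" by (rule module_comp)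
  have le: "pleq \<tau> f (f + f)" using assms(1) by simp
  show ?thesis
    using loc_add[OF assms(1,2) assms(1,3)] frac_expand[OF assms(1) _ le, of "m \<oplus>\<^bsub>comp M (q + f)\<^esub> n"]
      smap_add[OF pleq_offset[OF le] assms(2,3)] assms by (simp add: add.assoc)
qed

text \<open>Each axiom is inherited from \<open>comp M (q + F)\<close> once the fractions involved are written
  over a common denominator \<open>x\<^sup>F\<close>.\<close>

lemma abelian_group_loc: "abelian_group (comp (loc \<tau> M) q)"
proof (rule abelian_groupI)
  fix A B assume "A \<in> carrier (comp (loc \<tau> M) q)" "B \<in> carrier (comp (loc \<tau> M) q)"
  then obtain F m n where F: "F \<in> \<tau>" "m \<in> carrier (comp M (q + F))" "n \<in> carrier (comp M (q + F))"
    and AB: "A = frac \<tau> M q F m" "B = frac \<tau> M q F n"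
    by (rule loc_common_denom_pair)
  interpret module K "comp M (q + F)" by (rule module_comp)
  from F show "A \<oplus>\<^bsub>comp (loc \<tau> M) q\<^esub> B \<in> carrier (comp (loc \<tau> M) q)"
    "A \<oplus>\<^bsub>comp (loc \<tau> M) q\<^esub> B = B \<oplus>\<^bsub>comp (loc \<tau> M) q\<^esub> A"
    by (simp_all add: AB loc_add_same_denom frac_in_loc_carrier a_comm)
next
  show "\<zero>\<^bsub>comp (loc \<tau> M) q\<^esub> \<in> carrier (comp (loc \<tau> M) q)"
    using frac_in_loc_carrier[of 0 "\<zero>\<^bsub>comp M q\<^esub>" q] zero_closed submonoid_zero[OF \<tau>_submonoid]
    by (simp add: loc_zero)
next
  fix A B C
  assume "A \<in> carrier (comp (loc \<tau> M) q)" "B \<in> carrier (comp (loc \<tau> M) q)" "C \<in> carrier (comp (loc \<tau> M) q)"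
  then obtain F where F: "F \<in> \<tau>"
    and ABC: "\<forall>D\<in>{A, B, C}. \<exists>m\<in>carrier (comp M (q + F)). D = frac \<tau> M q F m"
    using loc_common_denom[of "{A, B, C}" q] by auto
  interpret module K "comp M (q + F)" by (rule module_comp)
  from ABC F show "A \<oplus>\<^bsub>comp (loc \<tau> M) q\<^esub> B \<oplus>\<^bsub>comp (loc \<tau> M) q\<^esub> C
      = A \<oplus>\<^bsub>comp (loc \<tau> M) q\<^esub> (B \<oplus>\<^bsub>comp (loc \<tau> M) q\<^esub> C)"
    by (auto simp: loc_add_same_denom a_assoc)
next
  fix A assume "A \<in> carrier (comp (loc \<tau> M) q)"
  then obtain f m where f: "f \<in> \<tau>" "m \<in> carrier (comp M (q + f))" and A: "A = frac \<tau> M q f m"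
    by (rule loc_carrierE)
  interpret module K "comp M (q + f)" by (rule module_comp)
  show "\<zero>\<^bsub>comp (loc \<tau> M) q\<^esub> \<oplus>\<^bsub>comp (loc \<tau> M) q\<^esub> A = A"
    using f by (simp add: A loc_zero_eq_frac[OF f(1)] loc_add_same_denom)
  have "frac \<tau> M q f (\<ominus>\<^bsub>comp M (q + f)\<^esub> m) \<oplus>\<^bsub>comp (loc \<tau> M) q\<^esub> A = \<zero>\<^bsub>comp (loc \<tau> M) q\<^esub>"
    using f by (simp add: A loc_zero_eq_frac[OF f(1)] loc_add_same_denom l_neg)
  then show "\<exists>B\<in>carrier (comp (loc \<tau> M) q). B \<oplus>\<^bsub>comp (loc \<tau> M) q\<^esub> A = \<zero>\<^bsub>comp (loc \<tau> M) q\<^esub>"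
    using f frac_in_loc_carrier by blast
qed

lemma module_loc: "module K (comp (loc \<tau> M) q)"
proof (rule moduleI)
  show "cring K" using module_comp by (simp add: module_def)
  show "abelian_group (comp (loc \<tau> M) q)" by (rule abelian_group_loc)
next
  fix a A assume a: "a \<in> carrier K" and "A \<in> carrier (comp (loc \<tau> M) q)"
  then obtain f m where f: "f \<in> \<tau>" "m \<in> carrier (comp M (q + f))" and A: "A = frac \<tau> M q f m"
    by (auto elim: loc_carrierE)
  interpret module K "comp M (q + f)" by (rule module_comp)
  from f a show "a \<odot>\<^bsub>comp (loc \<tau> M) q\<^esub> A \<in> carrier (comp (loc \<tau> M) q)"
    by (simp add: A loc_smult frac_in_loc_carrier)
next
  fix a b A assume a: "a \<in> carrier K" and b: "b \<in> carrier K" and "A \<in> carrier (comp (loc \<tau> M) q)"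
  then obtain f m where f: "f \<in> \<tau>" "m \<in> carrier (comp M (q + f))" and A: "A = frac \<tau> M q f m"
    by (auto elim: loc_carrierE)
  interpret module K "comp M (q + f)" by (rule module_comp)
  from f a b show "(a \<oplus>\<^bsub>K\<^esub> b) \<odot>\<^bsub>comp (loc \<tau> M) q\<^esub> A
      = a \<odot>\<^bsub>comp (loc \<tau> M) q\<^esub> A \<oplus>\<^bsub>comp (loc \<tau> M) q\<^esub> b \<odot>\<^bsub>comp (loc \<tau> M) q\<^esub> A"
    by (simp add: A loc_smult loc_add_same_denom smult_l_distr)
  from f a b show "(a \<otimes>\<^bsub>K\<^esub> b) \<odot>\<^bsub>comp (loc \<tau> M) q\<^esub> A
      = a \<odot>\<^bsub>comp (loc \<tau> M) q\<^esub> (b \<odot>\<^bsub>comp (loc \<tau> M) q\<^esub> A)"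
    by (simp add: A loc_smult smult_assoc1)
next
  fix a A B
  assume a: "a \<in> carrier K" and "A \<in> carrier (comp (loc \<tau> M) q)" "B \<in> carrier (comp (loc \<tau> M) q)"
  then obtain F m n where F: "F \<in> \<tau>" "m \<in> carrier (comp M (q + F))" "n \<in> carrier (comp M (q + F))"
    and AB: "A = frac \<tau> M q F m" "B = frac \<tau> M q F n"
    by (auto elim: loc_common_denom_pair)
  interpret module K "comp M (q + F)" by (rule module_comp)
  from F a show "a \<odot>\<^bsub>comp (loc \<tau> M) q\<^esub> (A \<oplus>\<^bsub>comp (loc \<tau> M) q\<^esub> B)
      = a \<odot>\<^bsub>comp (loc \<tau> M) q\<^esub> A \<oplus>\<^bsub>comp (loc \<tau> M) q\<^esub> a \<odot>\<^bsub>comp (loc \<tau> M) q\<^esub> B"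
    by (simp add: AB loc_smult loc_add_same_denom smult_r_distr)
next
  fix A assume "A \<in> carrier (comp (loc \<tau> M) q)"
  then obtain f m where f: "f \<in> \<tau>" "m \<in> carrier (comp M (q + f))" and A: "A = frac \<tau> M q f m"
    by (rule loc_carrierE)
  interpret module K "comp M (q + f)" by (rule module_comp)
  from f show "\<one>\<^bsub>K\<^esub> \<odot>\<^bsub>comp (loc \<tau> M) q\<^esub> A = A" by (simp add: A loc_smult)
qed

lemma smap_loc_klinear:
  assumes qq': "pleq P q q'"
  shows "klinear K (comp (loc \<tau> M) q) (comp (loc \<tau> M) q') (smap (loc \<tau> M) q q')"
  unfolding klinear_def
proof (intro conjI ballI)
  fix A assume "A \<in> carrier (comp (loc \<tau> M) q)"
  then obtain f m where f: "f \<in> \<tau>" "m \<in> carrier (comp M (q + f))" and A: "A = frac \<tau> M q f m"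
    by (rule loc_carrierE)
  have le: "pleq P (q + f) (q' + f)" using qq' by (rule pleq_add_right)
  show "smap (loc \<tau> M) q q' A \<in> carrier (comp (loc \<tau> M) q')"
    using loc_smap[OF f qq'] frac_in_loc_carrier[OF f(1) smap_closed[OF le f(2)]] by (simp add: A)
  fix c assume c: "c \<in> carrier K"
  interpret module K "comp M (q + f)" by (rule module_comp)
  have "smap (loc \<tau> M) q q' (c \<odot>\<^bsub>comp (loc \<tau> M) q\<^esub> A)
      = frac \<tau> M q' f (smap M (q + f) (q' + f) (c \<odot>\<^bsub>comp M (q + f)\<^esub> m))"
    using f c qq' by (simp add: A loc_smult loc_smap)
  also have "\<dots> = c \<odot>\<^bsub>comp (loc \<tau> M) q'\<^esub> smap (loc \<tau> M) q q' A"
    using f c qq' smap_closed[OF le f(2)] by (simp add: A loc_smult loc_smap smap_smult[OF le])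
  finally show "smap (loc \<tau> M) q q' (c \<odot>\<^bsub>comp (loc \<tau> M) q\<^esub> A)
      = c \<odot>\<^bsub>comp (loc \<tau> M) q'\<^esub> smap (loc \<tau> M) q q' A" .
next
  fix A B assume "A \<in> carrier (comp (loc \<tau> M) q)" "B \<in> carrier (comp (loc \<tau> M) q)"
  then obtain F m n where F: "F \<in> \<tau>" and mn: "m \<in> carrier (comp M (q + F))" "n \<in> carrier (comp M (q + F))"
    and AB: "A = frac \<tau> M q F m" "B = frac \<tau> M q F n"
    by (rule loc_common_denom_pair)
  have le: "pleq P (q + F) (q' + F)" using qq' by (rule pleq_add_right)
  interpret module K "comp M (q + F)" by (rule module_comp)
  show "smap (loc \<tau> M) q q' (A \<oplus>\<^bsub>comp (loc \<tau> M) q\<^esub> B)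
      = smap (loc \<tau> M) q q' A \<oplus>\<^bsub>comp (loc \<tau> M) q'\<^esub> smap (loc \<tau> M) q q' B"
    using F mn qq' smap_closed[OF le mn(1)] smap_closed[OF le mn(2)] smap_add[OF le mn]
    by (simp add: AB loc_add_same_denom loc_smap)
qed

lemma is_qmodule_loc: "is_qmodule P K (loc \<tau> M)"
  unfolding is_qmodule_def
proof (intro conjI allI impI ballI module_loc smap_loc_klinear)
  fix q A assume "A \<in> carrier (comp (loc \<tau> M) q)"
  then obtain f m where f: "f \<in> \<tau>" "m \<in> carrier (comp M (q + f))" and A: "A = frac \<tau> M q f m"
    by (rule loc_carrierE)
  show "smap (loc \<tau> M) q q A = A"
    using loc_smap[OF f pleq_refl[OF P_submonoid]] smap_id[OF f(2)] by (simp add: A)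
next
  fix q q' q'' A assume qq': "pleq P q q'" and q'q'': "pleq P q' q''" and "A \<in> carrier (comp (loc \<tau> M) q)"
  then obtain f m where f: "f \<in> \<tau>" "m \<in> carrier (comp M (q + f))" and A: "A = frac \<tau> M q f m"
    by (auto elim: loc_carrierE)
  have le: "pleq P (q + f) (q' + f)" "pleq P (q' + f) (q'' + f)"
    using qq' q'q'' by (simp_all add: pleq_add_right)
  show "smap (loc \<tau> M) q' q'' (smap (loc \<tau> M) q q' A) = smap (loc \<tau> M) q q'' A"
    using loc_smap[OF f qq'] loc_smap[OF f(1) smap_closed[OF le(1) f(2)] q'q'']
      loc_smap[OF f pleq_trans[OF P_submonoid qq' q'q'']] smap_trans[OF le f(2)]
    by (simp add: A)
qed

lemma q_module_loc: "q_module P K (loc \<tau> M)"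
  by unfold_locales (rule P_submonoid, rule is_qmodule_loc)

lemma qhom_locmap: "qhom P K M (loc \<tau> M) (locmap \<tau> M)"
  unfolding qhom_def klinear_def
proof (intro conjI allI impI ballI)
  have zero: "0 \<in> \<tau>" by (rule submonoid_zero[OF \<tau>_submonoid])
  fix q
  interpret module K "comp M q" by (rule module_comp)
  show "locmap \<tau> M q x \<in> carrier (comp (loc \<tau> M) q)" if "x \<in> carrier (comp M q)" for x
    using frac_in_loc_carrier[of 0 x q] zero that by (simp add: locmap_eq_frac)
  show "locmap \<tau> M q (x \<oplus>\<^bsub>comp M q\<^esub> y) = locmap \<tau> M q x \<oplus>\<^bsub>comp (loc \<tau> M) q\<^esub> locmap \<tau> M q y"
    if "x \<in> carrier (comp M q)" "y \<in> carrier (comp M q)" for x y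
    using loc_add_same_denom[of 0 x q y] zero that by (simp add: locmap_eq_frac)
  show "locmap \<tau> M q (c \<odot>\<^bsub>comp M q\<^esub> x) = c \<odot>\<^bsub>comp (loc \<tau> M) q\<^esub> locmap \<tau> M q x"
    if "c \<in> carrier K" "x \<in> carrier (comp M q)" for c x
    using loc_smult[of 0 x q c] zero that by (simp add: locmap_eq_frac)
next
  fix q q' x assume qq': "pleq P q q'" and x: "x \<in> carrier (comp M q)"
  show "locmap \<tau> M q' (smap M q q' x) = smap (loc \<tau> M) q q' (locmap \<tau> M q x)"
    using loc_smap[of 0 x q q'] submonoid_zero[OF \<tau>_submonoid] qq' x smap_closed[OF qq' x]
    by (simp add: locmap_eq_frac)
qed

lemma locmap_closed: "y \<in> carrier (comp M q) \<Longrightarrow> locmap \<tau> M q y \<in> carrier (comp (loc \<tau> M) q)"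
  using qhom_locmap by (simp add: qhom_def klinear_def)

lemma smap_loc_frac_eq_locmap:
  assumes f: "f \<in> \<tau>" "m \<in> carrier (comp M (q + f))" and le: "pleq P (q + f) q'"
  shows "smap (loc \<tau> M) q q' (frac \<tau> M q f m) = locmap \<tau> M q' (smap M (q + f) q' m)"
proof -
  have "pleq P q (q + f)" using f(1) \<tau>_subset by auto
  then have qq': "pleq P q q'" using pleq_trans[OF P_submonoid _ le] by blast
  have le': "pleq P q' (q' + f)" using f(1) \<tau>_subset by auto
  have "locmap \<tau> M q' (smap M (q + f) q' m) = frac \<tau> M q' f (smap M q' (q' + f) (smap M (q + f) q' m))"
    using frac_expand[of 0 "smap M (q + f) q' m" q' f] f(1) smap_closed[OF le f(2)]
    by (simp add: locmap_eq_frac submonoid_zero[OF \<tau>_submonoid])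
  also have "\<dots> = frac \<tau> M q' f (smap M (q + f) (q' + f) m)"
    using smap_trans[OF le le' f(2)] by simp
  finally show ?thesis using loc_smap[OF f qq'] by simp
qed

end

section \<open>Coprimary elements and coprimary modules\<close>

context q_module
begin

lemma q_localization_face: "face P \<sigma> \<Longrightarrow> q_localization P K M \<sigma>"
  by unfold_locales (simp_all add: P_submonoid is_qmodule face_subset face_submonoid)

lemma Gamma_graded_submodule: "graded_submodule P K M (Gamma P \<tau> M)"
proof -
  let ?I = "{\<sigma>. face P \<sigma> \<and> \<not> \<sigma> \<subseteq> \<tau>}"
  have "Gamma P \<tau> M = (\<lambda>q. {y \<in> carrier (comp M q). \<forall>\<sigma>\<in>?I. locmap \<sigma> M q y = \<zero>\<^bsub>comp (loc \<sigma> M) q\<^esub>})"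
    by (auto simp: Gamma_def fun_eq_iff)
  moreover have "is_qmodule P K (loc \<sigma> M)" "qhom P K M (loc \<sigma> M) (locmap \<sigma> M)" if "\<sigma> \<in> ?I" for \<sigma>
  proof -
    interpret q_localization P K M \<sigma> using that by (simp add: q_localization_face)
    show "is_qmodule P K (loc \<sigma> M)" "qhom P K M (loc \<sigma> M) (locmap \<sigma> M)"
      by (rule is_qmodule_loc, rule qhom_locmap)
  qed
  ultimately show ?thesis
    using graded_submodule_common_kernel[of ?I "\<lambda>\<sigma>. loc \<sigma> M" "\<lambda>\<sigma>. locmap \<sigma> M"] by simp
qed

end

context q_localization
begin

lemma persistent_iff_locmap_ne_zero:
  "y \<in> carrier (comp M q) \<Longrightarrow> persistent \<tau> M q y \<longleftrightarrow> locmap \<tau> M q y \<noteq> \<zero>\<^bsub>comp (loc \<tau> M) q\<^esub>"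
  by (simp add: persistent_def locmap_eq_zero_iff)

lemma inj_on_locmap_iff:
  "inj_on (locmap \<tau> M q) (carrier (comp M q)) \<longleftrightarrow>
    (\<forall>y\<in>carrier (comp M q). y \<noteq> \<zero>\<^bsub>comp M q\<^esub> \<longrightarrow> persistent \<tau> M q y)"
proof -
  have "klinear K (comp M q) (comp (loc \<tau> M) q) (locmap \<tau> M q)"
    using qhom_locmap by (simp add: qhom_def)
  then show ?thesis
    using klinear_inj_on_iff[OF module_comp module_loc] persistent_iff_locmap_ne_zero by auto
qed

lemma persistent_if_divides:
  assumes div: "divides P M q y q' y'" and pers: "persistent \<tau> M q' y'"
  shows "persistent \<tau> M q y"
  unfolding persistent_def
proof
  fix f assume f: "f \<in> \<tau>"
  have qq': "pleq P q q'" and y: "y \<in> carrier (comp M q)" and y': "y' = smap M q q' y"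
    using div by (auto simp: divides_def)
  have le: "pleq P q (q + f)" "pleq P (q + f) (q' + f)" "pleq P q' (q' + f)"
    using f \<tau>_subset qq' by (auto simp: pleq_add_right)
  have "smap M q' (q' + f) y' = smap M (q + f) (q' + f) (smap M q (q + f) y)"
    using smap_trans[OF qq' le(3) y] smap_trans[OF le(1,2) y] y' by simp
  moreover have "smap M q' (q' + f) y' \<noteq> \<zero>\<^bsub>comp M (q' + f)\<^esub>" using pers f by (simp add: persistent_def)
  ultimately show "smap M q (q + f) y \<noteq> \<zero>\<^bsub>comp M (q + f)\<^esub>" using smap_zero[OF le(2)] by auto
qed

lemma persistent_smap:
  assumes y: "y \<in> carrier (comp M q)" and pers: "persistent \<tau> M q y" and H: "H \<in> \<tau>"
  shows "persistent \<tau> M (q + H) (smap M q (q + H) y)"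
  unfolding persistent_def
proof
  fix f assume "f \<in> \<tau>"
  then have "H + f \<in> \<tau>" and le: "pleq P q (q + H)" "pleq P (q + H) (q + H + f)"
    using submonoid_add[OF \<tau>_submonoid H] \<tau>_subset H by auto
  then show "smap M (q + H) (q + H + f) (smap M q (q + H) y) \<noteq> \<zero>\<^bsub>comp M (q + H + f)\<^esub>"
    using pers smap_trans[OF le y] by (simp add: persistent_def add.assoc)
qed

lemma locmap_mem_Gamma_iff:
  assumes y: "y \<in> carrier (comp M q)"
  shows "locmap \<tau> M q y \<in> Gamma P \<tau> (loc \<tau> M) q \<longleftrightarrow>
    (\<forall>\<sigma>. face P \<sigma> \<and> \<not> \<sigma> \<subseteq> \<tau> \<longrightarrow> (\<exists>g\<in>\<sigma>. \<exists>h\<in>\<tau>. smap M q (q + g + h) y = \<zero>\<^bsub>comp M (q + g + h)\<^esub>))"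
proof -
  interpret L: q_module P K "loc \<tau> M" by (rule q_module_loc)
  have "locmap \<sigma> (loc \<tau> M) q (locmap \<tau> M q y) = \<zero>\<^bsub>comp (loc \<sigma> (loc \<tau> M)) q\<^esub> \<longleftrightarrow>
      (\<exists>g\<in>\<sigma>. \<exists>h\<in>\<tau>. smap M q (q + g + h) y = \<zero>\<^bsub>comp M (q + g + h)\<^esub>)"
    if \<sigma>: "face P \<sigma>" for \<sigma>
  proof -
    interpret L\<sigma>: q_localization P K "loc \<tau> M" \<sigma> by (rule L.q_localization_face[OF \<sigma>])
    have killed_iff: "locmap \<tau> M (q + g) (smap M q (q + g) y) = \<zero>\<^bsub>comp (loc \<tau> M) (q + g)\<^esub> \<longleftrightarrow>
        (\<exists>h\<in>\<tau>. smap M q (q + g + h) y = \<zero>\<^bsub>comp M (q + g + h)\<^esub>)" if g: "g \<in> \<sigma>" for g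
    proof -
      have le: "pleq P q (q + g)" "\<And>h. h \<in> \<tau> \<Longrightarrow> pleq P (q + g) (q + g + h)"
        using g \<tau>_subset face_subset[OF \<sigma>] by auto
      show ?thesis
        using locmap_eq_zero_iff[OF smap_closed[OF le(1) y]] smap_trans[OF le(1) le(2) y] by auto
    qed
    have "locmap \<sigma> (loc \<tau> M) q (locmap \<tau> M q y) = \<zero>\<^bsub>comp (loc \<sigma> (loc \<tau> M)) q\<^esub> \<longleftrightarrow>
        (\<exists>g\<in>\<sigma>. smap (loc \<tau> M) q (q + g) (locmap \<tau> M q y) = \<zero>\<^bsub>comp (loc \<tau> M) (q + g)\<^esub>)"
      by (rule L\<sigma>.locmap_eq_zero_iff[OF locmap_closed[OF y]])
    also have "\<dots> \<longleftrightarrow> (\<exists>g\<in>\<sigma>. locmap \<tau> M (q + g) (smap M q (q + g) y) = \<zero>\<^bsub>comp (loc \<tau> M) (q + g)\<^esub>)"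
    proof -
      have "smap (loc \<tau> M) q (q + g) (locmap \<tau> M q y) = locmap \<tau> M (q + g) (smap M q (q + g) y)"
        if "g \<in> \<sigma>" for g
        using qhom_locmap y that face_subset[OF \<sigma>] unfolding qhom_def by auto
      then show ?thesis by auto
    qed
    finally show ?thesis using killed_iff by simp
  qed
  then show ?thesis using locmap_closed[OF y] by (auto simp: Gamma_def)
qed

lemma coprimary_elem_locmap:
  assumes "coprimary_elem P \<tau> M q y"
  shows "locmap \<tau> M q y \<noteq> \<zero>\<^bsub>comp (loc \<tau> M) q\<^esub>" and "locmap \<tau> M q y \<in> Gamma P \<tau> (loc \<tau> M) q"
proof -
  have y: "y \<in> carrier (comp M q)" using assms by (simp add: coprimary_elem_def)
  show "locmap \<tau> M q y \<noteq> \<zero>\<^bsub>comp (loc \<tau> M) q\<^esub>"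
    using assms y by (simp add: coprimary_elem_def persistent_iff_locmap_ne_zero)
  have tr: "transient P \<tau> M q y" using assms by (simp add: coprimary_elem_def)
  have "\<exists>g\<in>\<sigma>. smap M q (q + g) y = \<zero>\<^bsub>comp M (q + g)\<^esub>" if "face P \<sigma>" "\<not> \<sigma> \<subseteq> \<tau>" for \<sigma>
    using transient_killed_along_faces[OF tr that] .
  then show "locmap \<tau> M q y \<in> Gamma P \<tau> (loc \<tau> M) q"
    using submonoid_zero[OF \<tau>_submonoid] by (simp add: locmap_mem_Gamma_iff[OF y]) fastforce
qed

text \<open>Polyhedrality makes the sum \<open>H\<close> of the \<open>\<tau>\<close>-degrees needed along the faces finite.\<close>

lemma locmap_mem_Gamma_common_degree:
  assumes poly: "polyhedral P" and y: "y \<in> carrier (comp M q)"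
    and Gamma: "locmap \<tau> M q y \<in> Gamma P \<tau> (loc \<tau> M) q"
  obtains H where "H \<in> \<tau>"
    "\<And>\<sigma>. face P \<sigma> \<Longrightarrow> \<not> \<sigma> \<subseteq> \<tau> \<Longrightarrow> \<exists>g\<in>\<sigma>. smap M q (q + H + g) y = \<zero>\<^bsub>comp M (q + H + g)\<^esub>"
proof -
  define F where "F = {\<sigma>. face P \<sigma> \<and> \<not> \<sigma> \<subseteq> \<tau>}"
  have "finite F" using poly unfolding polyhedral_def F_def by (rule rev_finite_subset) blast
  have "\<forall>\<sigma>\<in>F. \<exists>g\<in>\<sigma>. \<exists>h\<in>\<tau>. smap M q (q + g + h) y = \<zero>\<^bsub>comp M (q + g + h)\<^esub>"
    using Gamma by (simp add: locmap_mem_Gamma_iff[OF y] F_def)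
  then obtain g h where gh: "\<And>\<sigma>. \<sigma> \<in> F \<Longrightarrow> g \<sigma> \<in> \<sigma> \<and> h \<sigma> \<in> \<tau>
      \<and> smap M q (q + g \<sigma> + h \<sigma>) y = \<zero>\<^bsub>comp M (q + g \<sigma> + h \<sigma>)\<^esub>"
    by metis
  define H where "H = sum h F"
  have H: "H \<in> \<tau>" unfolding H_def using gh by (intro submonoid_sum[OF \<tau>_submonoid]) blast
  have "\<exists>g\<in>\<sigma>. smap M q (q + H + g) y = \<zero>\<^bsub>comp M (q + H + g)\<^esub>" if "face P \<sigma>" "\<not> \<sigma> \<subseteq> \<tau>" for \<sigma>
  proof -
    have \<sigma>: "\<sigma> \<in> F" and "g \<sigma> \<in> P" using that gh face_subset unfolding F_def by blast+
    have "H - h \<sigma> = sum h (F - {\<sigma>})" unfolding H_def using sum.remove[OF \<open>finite F\<close> \<sigma>, of h] by simp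
    moreover have "sum h (F - {\<sigma>}) \<in> \<tau>" using gh by (intro submonoid_sum[OF \<tau>_submonoid]) blast
    ultimately have "pleq P (q + g \<sigma> + h \<sigma>) (q + H + g \<sigma>)"
      using \<tau>_subset by (auto simp: pleq_def algebra_simps)
    moreover have "pleq P q (q + g \<sigma> + h \<sigma>)"
      using gh[OF \<sigma>] \<tau>_subset \<open>g \<sigma> \<in> P\<close> P_submonoid by (auto simp: add.assoc submonoid_add)
    ultimately show ?thesis using smap_eq_zero_mono[OF y] gh[OF \<sigma>] by blast
  qed
  with H that show ?thesis by blast
qed

lemma coprimary_elem_above:
  assumes poly: "polyhedral P" and y: "y \<in> carrier (comp M q)"
    and nonzero: "locmap \<tau> M q y \<noteq> \<zero>\<^bsub>comp (loc \<tau> M) q\<^esub>" and Gamma: "locmap \<tau> M q y \<in> Gamma P \<tau> (loc \<tau> M) q"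
  shows "\<exists>H\<in>\<tau>. coprimary_elem P \<tau> M (q + H) (smap M q (q + H) y)"
proof -
  obtain H where H: "H \<in> \<tau>"
    and killed: "\<And>\<sigma>. face P \<sigma> \<Longrightarrow> \<not> \<sigma> \<subseteq> \<tau> \<Longrightarrow> \<exists>g\<in>\<sigma>. smap M q (q + H + g) y = \<zero>\<^bsub>comp M (q + H + g)\<^esub>"
    using locmap_mem_Gamma_common_degree[OF poly y Gamma] by blast
  have qH: "pleq P q (q + H)" using H \<tau>_subset by auto
  have y': "smap M q (q + H) y \<in> carrier (comp M (q + H))" using smap_closed[OF qH y] .
  have "transient P \<tau> M (q + H) (smap M q (q + H) y)"
  proof (rule transient_if_killed_along_faces[OF y'])
    fix \<sigma> assume \<sigma>: "face P \<sigma>" "\<not> \<sigma> \<subseteq> \<tau>"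
    then obtain g where g: "g \<in> \<sigma>" "smap M q (q + H + g) y = \<zero>\<^bsub>comp M (q + H + g)\<^esub>"
      using killed by blast
    have "smap M (q + H) (q + H + g) (smap M q (q + H) y) = smap M q (q + H + g) y"
      using smap_trans[OF qH _ y, of "q + H + g"] g(1) face_subset[OF \<sigma>(1)] by auto
    then show "\<exists>g\<in>\<sigma>. smap M (q + H) (q + H + g) (smap M q (q + H) y) = \<zero>\<^bsub>comp M (q + H + g)\<^esub>"
      using g by auto
  qed
  moreover have "persistent \<tau> M (q + H) (smap M q (q + H) y)"
    using persistent_smap[OF y _ H] nonzero y by (simp add: persistent_iff_locmap_ne_zero)
  ultimately show ?thesis using H y' unfolding coprimary_elem_def by blast
qed

lemma essential_Gamma_if_divides_coprimary:
  assumes divides_coprimary: "\<forall>q y. y \<in> carrier (comp M q) \<and> y \<noteq> \<zero>\<^bsub>comp M q\<^esub> \<longrightarrow>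
    (\<exists>q' y'. divides P M q y q' y' \<and> coprimary_elem P \<tau> M q' y')"
  shows "essential P K (loc \<tau> M) (Gamma P \<tau> (loc \<tau> M))"
  unfolding essential_def
proof (intro conjI allI impI)
  interpret L: q_module P K "loc \<tau> M" by (rule q_module_loc)
  show "graded_submodule P K (loc \<tau> M) (Gamma P \<tau> (loc \<tau> M))" by (rule L.Gamma_graded_submodule)
  fix T assume "graded_submodule P K (loc \<tau> M) T \<and> (\<exists>q. \<exists>A\<in>T q. A \<noteq> \<zero>\<^bsub>comp (loc \<tau> M) q\<^esub>)"
  then obtain q A where T: "graded_submodule P K (loc \<tau> M) T"
    and A: "A \<in> T q" "A \<noteq> \<zero>\<^bsub>comp (loc \<tau> M) q\<^esub>" by blast
  have "T q \<subseteq> carrier (comp (loc \<tau> M) q)"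
    using T module.submoduleE(1)[OF L.module_comp] by (simp add: graded_submodule_def)
  then have "A \<in> carrier (comp (loc \<tau> M) q)" using A(1) by blast
  then obtain f m where f: "f \<in> \<tau>" "m \<in> carrier (comp M (q + f))" and Am: "A = frac \<tau> M q f m"
    by (rule loc_carrierE)
  have "m \<noteq> \<zero>\<^bsub>comp M (q + f)\<^esub>" using A(2) loc_zero_eq_frac[OF f(1)] Am by auto
  then obtain q' y' where div: "divides P M (q + f) m q' y'" and cop: "coprimary_elem P \<tau> M q' y'"
    using divides_coprimary f(2) by blast
  have le: "pleq P (q + f) q'" and y': "y' = smap M (q + f) q' m" using div by (auto simp: divides_def)
  have "pleq P q q'" using pleq_trans[OF P_submonoid _ le] f(1) \<tau>_subset by auto
  then have "smap (loc \<tau> M) q q' A \<in> T q'" using T A(1) by (simp add: graded_submodule_def)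
  then have "locmap \<tau> M q' y' \<in> T q'" using smap_loc_frac_eq_locmap[OF f le] Am y' by simp
  then show "\<exists>q. \<exists>Y\<in>T q \<inter> Gamma P \<tau> (loc \<tau> M) q. Y \<noteq> \<zero>\<^bsub>comp (loc \<tau> M) q\<^esub>"
    using coprimary_elem_locmap[OF cop] by blast
qed

lemma coprimary_module_if_divides_coprimary:
  assumes divides_coprimary: "\<forall>q y. y \<in> carrier (comp M q) \<and> y \<noteq> \<zero>\<^bsub>comp M q\<^esub> \<longrightarrow>
    (\<exists>q' y'. divides P M q y q' y' \<and> coprimary_elem P \<tau> M q' y')"
  shows "coprimary_module P K \<tau> M"
proof -
  have "persistent \<tau> M q y" if y: "y \<in> carrier (comp M q)" "y \<noteq> \<zero>\<^bsub>comp M q\<^esub>" for q y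
  proof -
    obtain q' y' where "divides P M q y q' y'" "coprimary_elem P \<tau> M q' y'"
      using divides_coprimary y by blast
    then show ?thesis using persistent_if_divides by (simp add: coprimary_elem_def)
  qed
  then have "inj_on (locmap \<tau> M q) (carrier (comp M q))" for q
    by (simp add: inj_on_locmap_iff)
  then show ?thesis
    using essential_Gamma_if_divides_coprimary[OF divides_coprimary] by (simp add: coprimary_module_def)
qed

text \<open>Essentiality is applied to the graded submodule generated by \<open>y/1\<close>.\<close>

lemma locmap_smap_mem_Gamma:
  assumes K: "field K" and ess: "essential P K (loc \<tau> M) (Gamma P \<tau> (loc \<tau> M))"
    and y: "y \<in> carrier (comp M q)" and nonzero: "locmap \<tau> M q y \<noteq> \<zero>\<^bsub>comp (loc \<tau> M) q\<^esub>"
  obtains q2 where "pleq P q q2"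
    "locmap \<tau> M q2 (smap M q q2 y) \<noteq> \<zero>\<^bsub>comp (loc \<tau> M) q2\<^esub>"
    "locmap \<tau> M q2 (smap M q q2 y) \<in> Gamma P \<tau> (loc \<tau> M) q2"
proof -
  interpret L: q_module P K "loc \<tau> M" by (rule q_module_loc)
  define w where "w q' = (if pleq P q q' then smap M q q' y else \<zero>\<^bsub>comp M q'\<^esub>)" for q'
  define T where "T q' = locmap \<tau> M q' ` {c \<odot>\<^bsub>comp M q'\<^esub> w q' |c. c \<in> carrier K}" for q'
  have T: "graded_submodule P K (loc \<tau> M) T"
    unfolding T_def w_def
    by (rule graded_submodule_image[OF is_qmodule is_qmodule_loc qhom_locmap graded_submodule_generated[OF y]])
  interpret Mq: module K "comp M q" by (rule module_comp)
  have "locmap \<tau> M q y \<in> T q"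
    using y smap_id pleq_refl[OF P_submonoid]
    unfolding T_def w_def by (intro imageI) (auto intro!: exI[of _ "\<one>\<^bsub>K\<^esub>"])
  then obtain q2 Y where Y: "Y \<in> T q2" "Y \<in> Gamma P \<tau> (loc \<tau> M) q2" "Y \<noteq> \<zero>\<^bsub>comp (loc \<tau> M) q2\<^esub>"
    using ess T nonzero unfolding essential_def by blast
  then obtain c where c: "c \<in> carrier K" and Yc: "Y = locmap \<tau> M q2 (c \<odot>\<^bsub>comp M q2\<^esub> w q2)"
    unfolding T_def by blast
  interpret M2: module K "comp M q2" by (rule module_comp)
  interpret L2: module K "comp (loc \<tau> M) q2" by (rule module_loc)
  have "locmap \<tau> M q2 \<zero>\<^bsub>comp M q2\<^esub> = \<zero>\<^bsub>comp (loc \<tau> M) q2\<^esub>"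
    using klinear_zero[OF module_comp module_loc] qhom_locmap by (simp add: qhom_def)
  then have qq2: "pleq P q q2" using Y(3) c by (auto simp: Yc w_def split: if_splits)
  define u where "u = smap M q q2 y"
  have u: "u \<in> carrier (comp M q2)" unfolding u_def using smap_closed[OF qq2 y] .
  have lu: "locmap \<tau> M q2 u \<in> carrier (comp (loc \<tau> M) q2)" using locmap_closed[OF u] .
  have Yu: "Y = c \<odot>\<^bsub>comp (loc \<tau> M) q2\<^esub> locmap \<tau> M q2 u"
    using qhom_locmap c u qq2 by (simp add: Yc w_def u_def qhom_def klinear_def)
  have "c \<noteq> \<zero>\<^bsub>K\<^esub>" using Y(3) lu by (auto simp: Yu)
  moreover have "submodule (Gamma P \<tau> (loc \<tau> M) q2) K (comp (loc \<tau> M) q2)"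
    using L.Gamma_graded_submodule by (simp add: graded_submodule_def)
  ultimately have "locmap \<tau> M q2 u \<in> Gamma P \<tau> (loc \<tau> M) q2"
    using submodule_smult_cancel[OF K module_loc _ c _ lu] Y(2) Yu by blast
  moreover have "locmap \<tau> M q2 u \<noteq> \<zero>\<^bsub>comp (loc \<tau> M) q2\<^esub>"
  proof
    assume "locmap \<tau> M q2 u = \<zero>\<^bsub>comp (loc \<tau> M) q2\<^esub>"
    then have "Y = \<zero>\<^bsub>comp (loc \<tau> M) q2\<^esub>" using c by (simp add: Yu)
    with Y(3) show False ..
  qed
  ultimately show ?thesis using that qq2 by (simp add: u_def)
qed

lemma divides_coprimary_if_coprimary_module:
  assumes K: "field K" and poly: "polyhedral P" and cop: "coprimary_module P K \<tau> M"
    and y: "y \<in> carrier (comp M q)" "y \<noteq> \<zero>\<^bsub>comp M q\<^esub>"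
  shows "\<exists>q' y'. divides P M q y q' y' \<and> coprimary_elem P \<tau> M q' y'"
proof -
  have "locmap \<tau> M q y \<noteq> \<zero>\<^bsub>comp (loc \<tau> M) q\<^esub>"
    using cop y by (simp add: coprimary_module_def inj_on_locmap_iff persistent_iff_locmap_ne_zero)
  then obtain q2 where qq2: "pleq P q q2"
    and "locmap \<tau> M q2 (smap M q q2 y) \<noteq> \<zero>\<^bsub>comp (loc \<tau> M) q2\<^esub>"
      "locmap \<tau> M q2 (smap M q q2 y) \<in> Gamma P \<tau> (loc \<tau> M) q2"
    using locmap_smap_mem_Gamma[OF K _ y(1)] cop by (auto simp: coprimary_module_def)
  then obtain H where H: "H \<in> \<tau>"
    and cop': "coprimary_elem P \<tau> M (q2 + H) (smap M q2 (q2 + H) (smap M q q2 y))"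
    using coprimary_elem_above[OF poly smap_closed[OF qq2 y(1)]] by blast
  have le: "pleq P q2 (q2 + H)" using H \<tau>_subset by auto
  have "divides P M q y (q2 + H) (smap M q2 (q2 + H) (smap M q q2 y))"
    using pleq_trans[OF P_submonoid qq2 le] y(1) smap_closed smap_trans[OF qq2 le y(1)]
    by (simp add: divides_def)
  with cop' show ?thesis by blast
qed

end

theorem theorem4p13:
  fixes P :: "'q::ab_group_add set" and K :: "('k, 'z) ring_scheme"
    and \<tau> :: "'q set" and M :: "('q, 'k, 'v) qmodule"
  assumes "pogroup P" and "polyhedral P" and "closed_pog P"
    and "face P \<tau>" and "field K" and "is_qmodule P K M"
  shows "coprimary_module P K \<tau> M \<longleftrightarrow>
    (\<forall>q y. y \<in> carrier (comp M q) \<and> y \<noteq> \<zero>\<^bsub>comp M q\<^esub> \<longrightarrow>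
       (\<exists>q' y'. divides P M q y q' y' \<and> coprimary_elem P \<tau> M q' y'))"
proof -
  interpret q_localization P K M \<tau>
    using assms by unfold_locales (simp_all add: pogroup_submonoid face_subset face_submonoid)
  show ?thesis
    using coprimary_module_if_divides_coprimary
      divides_coprimary_if_coprimary_module[OF \<open>field K\<close> \<open>polyhedral P\<close>]
    by blast
qed

end
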